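(* Let $L$ be a finite unramified extension of $\mathbb Q_\ell$ with ring of integers $S$, let $f_1\in S[t]$ be monic of degree $d_1$ with $f_1\equiv t^{d_1}\pmod\ell$, $R=S[t]/f_1S[t]$, $x$ the image of $t$. Let $T$ be an $R$-module that is free of finite rank over $S$, generated over $R$ by $r$ elements, with $\mathrm{Hp}(x|T)=(m_1,\dots,m_r)$, and let $f$ be the characteristic polynomial of $x$ on $T$. Then there exist $r\times r$ matrices $X,Y$ over $S[t]$ with $YX=f_1\cdot I_r$ and $\det X=f$ such that $T$ has the presentation $S[t]^r\xrightarrow{X}S[t]^r\to T\to0$ and $X\equiv\mathrm{diag}(t^{m_1},\dots,t^{m_r})\pmod\ell$.
   Context: $\mathrm{Hp}(x|T)=(m_1,\dots,m_r)$ means that the nilpotent endomorphism of the $S/\ell S$-vector space $T/\ell T$ induced by $x$ has Jordan blocks of sizes $m_1\ge\dots\ge m_r$ (its Young polygon has vertices $(\sum_{j\le i}m_j,i)$). *)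

theory Defs
  imports "Jordan_Normal_Form.Jordan_Normal_Form" "HOL-Computational_Algebra.Primes"
begin

text \<open>S is (abstractly) the ring of integers of a finite unramified extension of Q_l:
  a characteristic-0 domain that is a discrete valuation ring with uniformizer l,
  complete for the l-adic topology, with finite residue field S / l S.\<close>
definition unramified_int_ring :: "nat \<Rightarrow> 'a :: {idom, ring_char_0} itself \<Rightarrow> bool" where
  "unramified_int_ring l _ \<longleftrightarrow>
     prime l \<and>
     \<not> ((of_nat l :: 'a) dvd 1) \<and>
     (\<forall>s :: 'a. s \<noteq> 0 \<longrightarrow> (\<exists>u k. u dvd 1 \<and> s = u * of_nat l ^ k)) \<and>
     (\<forall>s :: nat \<Rightarrow> 'a. (\<forall>n. (of_nat l) ^ n dvd s (Suc n) - s n) \<longrightarrow>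
         (\<exists>y. \<forall>n. (of_nat l) ^ n dvd y - s n)) \<and>
     (\<exists>C :: 'a set. finite C \<and> (\<forall>s. \<exists>c\<in>C. of_nat l dvd s - c))"

text \<open>pi : S -> k is a reduction map onto a residue field, i.e. a surjective ring
  homomorphism with kernel l S (so k = S / l S).\<close>
definition residue_map :: "nat \<Rightarrow> ('a :: comm_ring_1 \<Rightarrow> 'k :: field) \<Rightarrow> bool" where
  "residue_map l \<pi> \<longleftrightarrow>
     (\<forall>a b. \<pi> (a + b) = \<pi> a + \<pi> b) \<and> (\<forall>a b. \<pi> (a * b) = \<pi> a * \<pi> b) \<and> \<pi> 1 = 1 \<and>
     surj \<pi> \<and> (\<forall>a. \<pi> a = 0 \<longleftrightarrow> of_nat l dvd a)"

definition poly_cong_l :: "nat \<Rightarrow> 'a :: comm_ring_1 poly \<Rightarrow> 'a poly \<Rightarrow> bool" where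
  "poly_cong_l l p q \<longleftrightarrow> (\<forall>k. (of_nat l :: 'a) dvd coeff (p - q) k)"

fun horner_mat :: "'a :: comm_ring_1 mat \<Rightarrow> 'a list \<Rightarrow> 'a mat" where
  "horner_mat A [] = 0\<^sub>m (dim_row A) (dim_row A)"
| "horner_mat A (c # cs) = c \<cdot>\<^sub>m 1\<^sub>m (dim_row A) + A * horner_mat A cs"

definition mat_eval_poly :: "'a :: comm_ring_1 mat \<Rightarrow> 'a poly \<Rightarrow> 'a mat" where
  "mat_eval_poly A p = horner_mat A (coeffs p)"

text \<open>The S[t]-linear map S[t]^r -> S^n, (q_i) |-> sum_i q_i(A) v_i, where t acts by A.\<close>
definition pres_map :: "'a :: comm_ring_1 mat \<Rightarrow> 'a vec list \<Rightarrow> 'a poly vec \<Rightarrow> 'a vec" where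
  "pres_map A vs q =
     foldr (+) (map (\<lambda>i. mat_eval_poly A (q $ i) *\<^sub>v (vs ! i)) [0..<length vs]) (0\<^sub>v (dim_row A))"

text \<open>Hp(N) = ms: ms is a weakly decreasing list whose nonzero entries are the sizes of the
  Jordan blocks of the nilpotent matrix N (zero entries pad the list).\<close>
definition Hp_is :: "'k :: field mat \<Rightarrow> nat list \<Rightarrow> bool" where
  "Hp_is N ms \<longleftrightarrow> sorted (rev ms) \<and>
     jordan_nf N (map (\<lambda>m. (m, 0)) (filter (\<lambda>m. m \<noteq> 0) ms))"

end

theory Submission
  imports Defs
begin

(* Let A be the matrix of x on T = S^n.  By Hp(x|T) = (m_1, ..., m_r) the
   reduction of A modulo l is similar to the nilpotent Jordan matrix with blocks
   m_1 >= ... >= m_r' > 0 (the remaining m_i vanish).  Lift the heads of the Jordan chains to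
   vectors v_i in S^n.  The vectors A^j v_i (j < m_i) reduce to a Jordan basis of S^n / l S^n,
   so their matrix W has a determinant with nonzero residue, a unit of the DVR S: they form an
   S-basis.  In this basis A is a block companion matrix whose last columns are the
   coordinates d_k of A^(m_k) v_k.  Hence the v_i generate T over S[t] with relation matrix
   X_ik = [i = k] t^(m_i) - sum_j d_k(i,j) t^j;  det X = char_poly A;  X = diag(t^(m_i))
   modulo l because A^(m_k) v_k vanishes modulo l;  and f1(A) = 0 yields Y with Y X = f1 I. *)

subsection \<open>Evaluating polynomials at a square matrix\<close>

lemma mult_mat_vec_nth_sum:
  assumes "M \<in> carrier_mat m n" "v \<in> carrier_vec n" "i < m"
  shows "(M *\<^sub>v v) $ i = (\<Sum>k<n. M $$ (i,k) * v $ k)"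
  using assms by (auto simp: scalar_prod_def atLeast0LessThan)

lemma zero_mat_mult_vec: "v \<in> carrier_vec n \<Longrightarrow> 0\<^sub>m m n *\<^sub>v v = 0\<^sub>v m"
  by (intro eq_vecI) (auto simp: scalar_prod_def)

lemma mult_mat_vec_zero: "M \<in> carrier_mat m n \<Longrightarrow> M *\<^sub>v 0\<^sub>v n = 0\<^sub>v m"
  by (intro eq_vecI) auto

lemma smult_one_mat_mult_vec:
  fixes c :: "'a :: comm_ring_1"
  assumes w: "w \<in> carrier_vec n"
  shows "(c \<cdot>\<^sub>m 1\<^sub>m n) *\<^sub>v w = c \<cdot>\<^sub>v w"
proof (rule eq_vecI)
  fix i assume "i < dim_vec (c \<cdot>\<^sub>v w)"
  then have i: "i < n" using w by simp
  have "((c \<cdot>\<^sub>m 1\<^sub>m n) *\<^sub>v w) $ i = (\<Sum>k<n. if k = i then c * w $ k else 0)"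
    using i w by (auto simp: mult_mat_vec_nth_sum[of _ n n] intro!: sum.cong)
  then show "((c \<cdot>\<^sub>m 1\<^sub>m n) *\<^sub>v w) $ i = (c \<cdot>\<^sub>v w) $ i" using i w by simp
qed (use w in simp)

lemma pow_mat_mult_vec_Suc:
  assumes A: "A \<in> carrier_mat n n" and w: "w \<in> carrier_vec n"
  shows "A *\<^sub>v (A ^\<^sub>m j *\<^sub>v w) = A ^\<^sub>m Suc j *\<^sub>v w"
proof -
  have "A * A ^\<^sub>m j = A ^\<^sub>m j * A"
    using A by (induct j) (simp_all add: assoc_mult_mat[of A n n _ n A n, symmetric])
  then show ?thesis using A w by (simp add: assoc_mult_mat_vec[of A n n "A ^\<^sub>m j" n w, symmetric])
qed

lemma pow_mat_mult_vec_carrier: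
  "A \<in> carrier_mat n n \<Longrightarrow> v \<in> carrier_vec n \<Longrightarrow> A ^\<^sub>m j *\<^sub>v v \<in> carrier_vec n"
  by (meson mult_mat_vec_carrier pow_carrier_mat)

lemma mat_eval_poly_carrier: "A \<in> carrier_mat n n \<Longrightarrow> mat_eval_poly A p \<in> carrier_mat n n"
proof -
  have "A \<in> carrier_mat n n \<Longrightarrow> horner_mat A cs \<in> carrier_mat n n" for cs
    by (induct cs) auto
  then show "A \<in> carrier_mat n n \<Longrightarrow> mat_eval_poly A p \<in> carrier_mat n n"
    unfolding mat_eval_poly_def .
qed

lemma dim_mat_eval_poly [simp]:
  "dim_row (mat_eval_poly A p) = dim_row A" "dim_col (mat_eval_poly A p) = dim_row A"
proof -
  have "dim_row (horner_mat A cs) = dim_row A \<and> dim_col (horner_mat A cs) = dim_row A" for cs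
    by (induct cs) auto
  then show "dim_row (mat_eval_poly A p) = dim_row A" "dim_col (mat_eval_poly A p) = dim_row A"
    unfolding mat_eval_poly_def by auto
qed

lemma mat_eval_poly_mult_vec_carrier:
  "A \<in> carrier_mat n n \<Longrightarrow> w \<in> carrier_vec n \<Longrightarrow> mat_eval_poly A p *\<^sub>v w \<in> carrier_vec n"
  using mat_eval_poly_carrier by (metis mult_mat_vec_carrier)

lemma mat_eval_poly_0: "A \<in> carrier_mat n n \<Longrightarrow> mat_eval_poly A 0 = 0\<^sub>m n n"
  unfolding mat_eval_poly_def by auto

lemma mat_eval_poly_pCons:
  assumes A: "A \<in> carrier_mat n n"
  shows "mat_eval_poly A (pCons c q) = c \<cdot>\<^sub>m 1\<^sub>m n + A * mat_eval_poly A q"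
proof (cases "q = 0 \<and> c = 0")
  case True
  then show ?thesis using A by (auto simp: mat_eval_poly_def)
next
  case False
  then have "coeffs (pCons c q) = c # coeffs q" by (auto simp: cCons_def)
  then show ?thesis using A unfolding mat_eval_poly_def by simp
qed

lemma mat_eval_poly_pCons_mult_vec:
  assumes A: "A \<in> carrier_mat n n" and w: "w \<in> carrier_vec n"
  shows "mat_eval_poly A (pCons c p) *\<^sub>v w = c \<cdot>\<^sub>v w + A *\<^sub>v (mat_eval_poly A p *\<^sub>v w)"
  using A w mat_eval_poly_carrier[OF A, of p] unfolding mat_eval_poly_pCons[OF A]
  by (simp add: add_mult_distrib_mat_vec[of _ n n] assoc_mult_mat_vec[of _ n n _ n]
      smult_one_mat_mult_vec)

text \<open>The basic expansion: (p(A) w)_a = sum_j p_j (A^j w)_a, for any bound N on the support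
  of p.  All algebraic properties of evaluation below are read off from it.\<close>
lemma mat_eval_poly_mult_vec_nth:
  assumes A: "A \<in> carrier_mat n n" and w: "w \<in> carrier_vec n"
  shows "a < n \<Longrightarrow> \<forall>j\<ge>N. coeff p j = 0 \<Longrightarrow>
    (mat_eval_poly A p *\<^sub>v w) $ a = (\<Sum>j<N. coeff p j * (A ^\<^sub>m j *\<^sub>v w) $ a)"
proof (induct N arbitrary: p a)
  case 0
  then have "p = 0" by (intro poly_eqI) auto
  then show ?case using A w 0 by (simp add: mat_eval_poly_0 zero_mat_mult_vec)
next
  case (Suc N)
  obtain c q where p: "p = pCons c q" by (cases p)
  have a: "a < n" by (rule Suc(2))
  have "\<forall>j\<ge>N. coeff q j = 0" using Suc(3) unfolding p by auto
  then have IH: "\<And>b. b < n \<Longrightarrow> (mat_eval_poly A q *\<^sub>v w) $ b = (\<Sum>j<N. coeff q j * (A ^\<^sub>m j *\<^sub>v w) $ b)"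
    using Suc(1) by blast
  have Eq: "mat_eval_poly A q *\<^sub>v w \<in> carrier_vec n"
    by (rule mat_eval_poly_mult_vec_carrier[OF A w])
  have powc: "A ^\<^sub>m j *\<^sub>v w \<in> carrier_vec n" for j by (rule pow_mat_mult_vec_carrier[OF A w])
  have "(mat_eval_poly A p *\<^sub>v w) $ a = c * w $ a + (A *\<^sub>v (mat_eval_poly A q *\<^sub>v w)) $ a"
    using A w a Eq unfolding p mat_eval_poly_pCons_mult_vec[OF A w] by simp
  also have "(A *\<^sub>v (mat_eval_poly A q *\<^sub>v w)) $ a
      = (\<Sum>b<n. A $$ (a,b) * (\<Sum>j<N. coeff q j * (A ^\<^sub>m j *\<^sub>v w) $ b))"
    using mult_mat_vec_nth_sum[OF A Eq a] IH by simp
  also have "\<dots> = (\<Sum>j<N. coeff q j * (\<Sum>b<n. A $$ (a,b) * (A ^\<^sub>m j *\<^sub>v w) $ b))"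
    by (simp add: sum_distrib_left sum.swap[of _ "{..<n}"] mult.left_commute)
  also have "\<dots> = (\<Sum>j<N. coeff p (Suc j) * (A ^\<^sub>m Suc j *\<^sub>v w) $ a)"
    using mult_mat_vec_nth_sum[OF A powc a] pow_mat_mult_vec_Suc[OF A w] unfolding p by simp
  also have "c * w $ a = coeff p 0 * (A ^\<^sub>m 0 *\<^sub>v w) $ a" using A w a unfolding p by simp
  also have "coeff p 0 * (A ^\<^sub>m 0 *\<^sub>v w) $ a + (\<Sum>j<N. coeff p (Suc j) * (A ^\<^sub>m Suc j *\<^sub>v w) $ a)
      = (\<Sum>j<Suc N. coeff p j * (A ^\<^sub>m j *\<^sub>v w) $ a)"
    by (rule sum.lessThan_Suc_shift[symmetric])
  finally show ?case .
qed

lemma mat_eval_poly_mult_vec_nth_degree: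
  assumes "A \<in> carrier_mat n n" "w \<in> carrier_vec n" "a < n" "degree p < N"
  shows "(mat_eval_poly A p *\<^sub>v w) $ a = (\<Sum>j<N. coeff p j * (A ^\<^sub>m j *\<^sub>v w) $ a)"
  using assms by (intro mat_eval_poly_mult_vec_nth) (auto intro: coeff_eq_0)

lemma mat_eval_poly_add_mult_vec:
  assumes A: "A \<in> carrier_mat n n" and w: "w \<in> carrier_vec n"
  shows "mat_eval_poly A (p + q) *\<^sub>v w = mat_eval_poly A p *\<^sub>v w + mat_eval_poly A q *\<^sub>v w"
proof (rule eq_vecI)
  let ?N = "Suc (degree p + degree q)"
  have N: "degree p < ?N" "degree q < ?N" "degree (p + q) < ?N"
    using degree_add_le_max[of p q] by auto
  fix a assume "a < dim_vec (mat_eval_poly A p *\<^sub>v w + mat_eval_poly A q *\<^sub>v w)"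
  then have a: "a < n" using A by simp
  show "(mat_eval_poly A (p + q) *\<^sub>v w) $ a = (mat_eval_poly A p *\<^sub>v w + mat_eval_poly A q *\<^sub>v w) $ a"
    using A a
    by (simp add: mat_eval_poly_mult_vec_nth_degree[OF A w a N(1)]
        mat_eval_poly_mult_vec_nth_degree[OF A w a N(2)]
        mat_eval_poly_mult_vec_nth_degree[OF A w a N(3)] sum.distrib distrib_right)
qed (use mat_eval_poly_carrier[OF A] in simp)

lemma mat_eval_poly_diff_mult_vec_nth:
  assumes A: "A \<in> carrier_mat n n" and w: "w \<in> carrier_vec n" and a: "a < n"
  shows "(mat_eval_poly A (p - q) *\<^sub>v w) $ a
       = (mat_eval_poly A p *\<^sub>v w) $ a - (mat_eval_poly A q *\<^sub>v w) $ a"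
proof -
  let ?N = "Suc (degree p + degree q)"
  have N: "degree p < ?N" "degree q < ?N" "degree (p - q) < ?N"
    using degree_diff_le_max[of p q] by auto
  show ?thesis
    by (simp add: mat_eval_poly_mult_vec_nth_degree[OF A w a N(1)]
        mat_eval_poly_mult_vec_nth_degree[OF A w a N(2)]
        mat_eval_poly_mult_vec_nth_degree[OF A w a N(3)] sum_subtractf left_diff_distrib)
qed

lemma mat_eval_poly_smult_mult_vec:
  assumes A: "A \<in> carrier_mat n n" and w: "w \<in> carrier_vec n"
  shows "mat_eval_poly A (Polynomial.smult c p) *\<^sub>v w = c \<cdot>\<^sub>v (mat_eval_poly A p *\<^sub>v w)"
proof (rule eq_vecI)
  let ?N = "Suc (degree p)"
  have N: "degree p < ?N" "degree (Polynomial.smult c p) < ?N"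
    using degree_smult_le[of c p] by auto
  fix a assume "a < dim_vec (c \<cdot>\<^sub>v (mat_eval_poly A p *\<^sub>v w))"
  then have a: "a < n" using A by simp
  show "(mat_eval_poly A (Polynomial.smult c p) *\<^sub>v w) $ a = (c \<cdot>\<^sub>v (mat_eval_poly A p *\<^sub>v w)) $ a"
    using A a
    by (simp add: mat_eval_poly_mult_vec_nth_degree[OF A w a N(1)]
        mat_eval_poly_mult_vec_nth_degree[OF A w a N(2)] sum_distrib_left distrib_left mult.assoc)
qed (use mat_eval_poly_carrier[OF A] in simp)

lemma mat_eval_poly_mult_mult_vec:
  assumes A: "A \<in> carrier_mat n n" and w: "w \<in> carrier_vec n"
  shows "mat_eval_poly A (p * q) *\<^sub>v w = mat_eval_poly A p *\<^sub>v (mat_eval_poly A q *\<^sub>v w)"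
proof (induct p)
  case 0
  then show ?case
    using A w mat_eval_poly_mult_vec_carrier[OF A w, of q] by (simp add: mat_eval_poly_0 zero_mat_mult_vec)
next
  case (pCons c p)
  have Eq: "mat_eval_poly A q *\<^sub>v w \<in> carrier_vec n" by (rule mat_eval_poly_mult_vec_carrier[OF A w])
  have Epq: "A *\<^sub>v (mat_eval_poly A (p * q) *\<^sub>v w) \<in> carrier_vec n"
    using A mat_eval_poly_mult_vec_carrier[OF A w] by simp
  have "mat_eval_poly A (pCons c p * q) *\<^sub>v w
      = mat_eval_poly A (Polynomial.smult c q + pCons 0 (p * q)) *\<^sub>v w"
    by simp
  also have "\<dots> = c \<cdot>\<^sub>v (mat_eval_poly A q *\<^sub>v w) + A *\<^sub>v (mat_eval_poly A (p * q) *\<^sub>v w)"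
  proof -
    have "0 \<cdot>\<^sub>v w + A *\<^sub>v (mat_eval_poly A (p * q) *\<^sub>v w) = A *\<^sub>v (mat_eval_poly A (p * q) *\<^sub>v w)"
      using A w Epq by (intro eq_vecI) auto
    then show ?thesis
      unfolding mat_eval_poly_add_mult_vec[OF A w] mat_eval_poly_smult_mult_vec[OF A w]
        mat_eval_poly_pCons_mult_vec[OF A w] by simp
  qed
  also have "\<dots> = mat_eval_poly A (pCons c p) *\<^sub>v (mat_eval_poly A q *\<^sub>v w)"
    unfolding mat_eval_poly_pCons_mult_vec[OF A Eq] pCons(2) ..
  finally show ?case .
qed

lemma mat_eval_poly_sum_mult_vec_nth:
  assumes A: "A \<in> carrier_mat n n" and w: "w \<in> carrier_vec n" and a: "a < n" and K: "finite K"
  shows "(mat_eval_poly A (\<Sum>k\<in>K. f k) *\<^sub>v w) $ a = (\<Sum>k\<in>K. (mat_eval_poly A (f k) *\<^sub>v w) $ a)"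
  using K
proof (induct K rule: finite_induct)
  case empty
  then show ?case using A w a by (simp add: mat_eval_poly_0 zero_mat_mult_vec)
next
  case (insert x F)
  then show ?case
    using mat_eval_poly_add_mult_vec[OF A w, of "f x" "sum f F"] A a by simp
qed

lemma mult_mat_vec_sum_nth:
  assumes M: "M \<in> carrier_mat n n" and a: "a < n" and K: "finite K"
    and y: "\<And>k. k \<in> K \<Longrightarrow> y k \<in> carrier_vec n" and z: "z \<in> carrier_vec n"
    and zy: "\<And>b. b < n \<Longrightarrow> z $ b = (\<Sum>k\<in>K. y k $ b)"
  shows "(M *\<^sub>v z) $ a = (\<Sum>k\<in>K. (M *\<^sub>v y k) $ a)"
proof -
  have "(M *\<^sub>v z) $ a = (\<Sum>b<n. M $$ (a,b) * (\<Sum>k\<in>K. y k $ b))"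
    using mult_mat_vec_nth_sum[OF M z a] zy by simp
  also have "\<dots> = (\<Sum>k\<in>K. \<Sum>b<n. M $$ (a,b) * y k $ b)"
    by (simp add: sum_distrib_left sum.swap[of _ K])
  also have "\<dots> = (\<Sum>k\<in>K. (M *\<^sub>v y k) $ a)"
    using mult_mat_vec_nth_sum[OF M _ a] y by simp
  finally show ?thesis .
qed


subsection \<open>The presentation map S[t]^r \<rightarrow> S^n\<close>

lemma foldr_add_vec:
  assumes "set xs \<subseteq> carrier_vec n"
  shows "foldr (+) xs (0\<^sub>v n) \<in> carrier_vec n \<and>
    (\<forall>a<n. foldr (+) xs (0\<^sub>v n) $ a = sum_list (map (\<lambda>v. v $ a) xs))"
  using assms by (induct xs) auto

context
  fixes A :: "'a :: comm_ring_1 mat" and n :: nat and vs :: "'a vec list"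
  assumes A: "A \<in> carrier_mat n n" and vs: "set vs \<subseteq> carrier_vec n"
begin

private lemma summands_carrier:
  "set (map (\<lambda>i. mat_eval_poly A (q $ i) *\<^sub>v vs ! i) [0..<length vs]) \<subseteq> carrier_vec n"
  using mat_eval_poly_carrier[OF A] vs by (auto intro!: mult_mat_vec_carrier)

lemma pres_map_carrier: "pres_map A vs q \<in> carrier_vec n"
  using foldr_add_vec[OF summands_carrier] A unfolding pres_map_def by simp

lemma pres_map_nth:
  assumes a: "a < n"
  shows "pres_map A vs q $ a = (\<Sum>i<length vs. (mat_eval_poly A (q $ i) *\<^sub>v vs ! i) $ a)"
  using foldr_add_vec[OF summands_carrier] A a
  unfolding pres_map_def by (simp add: sum_list_sum_nth atLeast0LessThan)

lemma pres_map_nth_coeffs: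
  assumes a: "a < n" and N: "\<forall>i<length vs. \<forall>j\<ge>N. coeff (q $ i) j = 0"
  shows "pres_map A vs q $ a
       = (\<Sum>i<length vs. \<Sum>j<N. coeff (q $ i) j * (A ^\<^sub>m j *\<^sub>v vs ! i) $ a)"
  unfolding pres_map_nth[OF a]
proof (intro sum.cong refl)
  fix i assume "i \<in> {..<length vs}"
  then show "(mat_eval_poly A (q $ i) *\<^sub>v vs ! i) $ a
    = (\<Sum>j<N. coeff (q $ i) j * (A ^\<^sub>m j *\<^sub>v vs ! i) $ a)"
    using vs N by (intro mat_eval_poly_mult_vec_nth[OF A _ a]) auto
qed

lemma pres_map_diff_nth:
  assumes a: "a < n" and q1: "q1 \<in> carrier_vec (length vs)" and q2: "q2 \<in> carrier_vec (length vs)"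
  shows "pres_map A vs (q1 - q2) $ a = pres_map A vs q1 $ a - pres_map A vs q2 $ a"
  unfolding pres_map_nth[OF a] sum_subtractf[symmetric]
proof (intro sum.cong refl)
  fix i assume i: "i \<in> {..<length vs}"
  then have "vs ! i \<in> carrier_vec n" using vs by auto
  then show "(mat_eval_poly A ((q1 - q2) $ i) *\<^sub>v vs ! i) $ a
    = (mat_eval_poly A (q1 $ i) *\<^sub>v vs ! i) $ a - (mat_eval_poly A (q2 $ i) *\<^sub>v vs ! i) $ a"
    using q1 q2 i mat_eval_poly_diff_mult_vec_nth[OF A _ a] by auto
qed

lemma pres_map_mult_mat_vec_nth:
  assumes X: "X \<in> carrier_mat r r" and p: "p \<in> carrier_vec r" and r: "length vs = r"
    and a: "a < n"
  shows "pres_map A vs (X *\<^sub>v p) $ a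
       = (\<Sum>k<r. (mat_eval_poly A (p $ k) *\<^sub>v pres_map A vs (col X k)) $ a)"
proof -
  let ?E = "mat_eval_poly A"
  have v: "vs ! i \<in> carrier_vec n" if "i < r" for i using vs r that by auto
  have "pres_map A vs (X *\<^sub>v p) $ a = (\<Sum>i<r. (?E ((X *\<^sub>v p) $ i) *\<^sub>v vs ! i) $ a)"
    using pres_map_nth[OF a] r by simp
  also have "\<dots> = (\<Sum>i<r. \<Sum>k<r. (?E (p $ k) *\<^sub>v (?E (X $$ (i,k)) *\<^sub>v vs ! i)) $ a)"
  proof (rule sum.cong, simp)
    fix i assume "i \<in> {..<r}"
    then have i: "i < r" by simp
    have "(?E ((X *\<^sub>v p) $ i) *\<^sub>v vs ! i) $ a = (?E (\<Sum>k<r. X $$ (i,k) * p $ k) *\<^sub>v vs ! i) $ a"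
      using mult_mat_vec_nth_sum[OF X p i] by simp
    also have "\<dots> = (\<Sum>k<r. (?E (X $$ (i,k) * p $ k) *\<^sub>v vs ! i) $ a)"
      by (rule mat_eval_poly_sum_mult_vec_nth[OF A v[OF i] a]) simp
    also have "\<dots> = (\<Sum>k<r. (?E (p $ k) *\<^sub>v (?E (X $$ (i,k)) *\<^sub>v vs ! i)) $ a)"
      by (rule sum.cong)
        (simp_all add: mult.commute[of "X $$ (i,_)"] mat_eval_poly_mult_mult_vec[OF A v[OF i]])
    finally show "(?E ((X *\<^sub>v p) $ i) *\<^sub>v vs ! i) $ a
      = (\<Sum>k<r. (?E (p $ k) *\<^sub>v (?E (X $$ (i,k)) *\<^sub>v vs ! i)) $ a)" .
  qed
  also have "\<dots> = (\<Sum>k<r. \<Sum>i<r. (?E (p $ k) *\<^sub>v (?E (X $$ (i,k)) *\<^sub>v vs ! i)) $ a)"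
    by (rule sum.swap)
  also have "\<dots> = (\<Sum>k<r. (?E (p $ k) *\<^sub>v pres_map A vs (col X k)) $ a)"
  proof (rule sum.cong, simp)
    fix k assume "k \<in> {..<r}"
    then have k: "k < r" by simp
    show "(\<Sum>i<r. (?E (p $ k) *\<^sub>v (?E (X $$ (i,k)) *\<^sub>v vs ! i)) $ a)
      = (?E (p $ k) *\<^sub>v pres_map A vs (col X k)) $ a"
      using X k r v pres_map_nth pres_map_carrier mat_eval_poly_mult_vec_carrier[OF A]
      by (intro mult_mat_vec_sum_nth[symmetric, OF mat_eval_poly_carrier[OF A] a]) auto
  qed
  finally show ?thesis .
qed

lemma pres_map_mult_mat_vec_zero:
  assumes X: "X \<in> carrier_mat r r" and p: "p \<in> carrier_vec r" and r: "length vs = r"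
    and cols: "\<And>k. k < r \<Longrightarrow> pres_map A vs (col X k) = 0\<^sub>v n"
  shows "pres_map A vs (X *\<^sub>v p) = 0\<^sub>v n"
proof (rule eq_vecI)
  fix a assume "a < dim_vec (0\<^sub>v n)"
  then have a: "a < n" by simp
  show "pres_map A vs (X *\<^sub>v p) $ a = 0\<^sub>v n $ a"
    unfolding pres_map_mult_mat_vec_nth[OF X p r a] using cols a mat_eval_poly_carrier[OF A]
    by (simp add: mult_mat_vec_zero[OF mat_eval_poly_carrier[OF A]])
qed (use pres_map_carrier in simp)

end

subsection \<open>Cells of the Jordan chains and two orderings of them\<close>

lemma bij_betw_lessThan_of_inj:
  assumes "inj_on f X" "f ` X \<subseteq> {..<m}" "card X = m"
  shows "bij_betw f X {..<m}"
  using assms card_image[OF assms(1)] card_subset_eq[OF _ assms(2)] unfolding bij_betw_def by simp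

text \<open>The chains have lengths ms!0, ..., ms!(r'-1), all positive; their cells (i,j), j < ms!i,
  stand for the vectors A^j v_i.  Two numberings of the cells by {..<total} are used:
  pos lists all chain heads (i,0) first and then the remaining cells chain by chain (this
  makes the relation matrix the upper-left r' x r' block); jpos is the column numbering of
  the Jordan matrix, in which cell (i,j) sits at the column start i + (ms!i - 1 - j), so
  that the head is the last column of its Jordan block.\<close>
locale chain_cells =
  fixes ms :: "nat list" and r' :: nat
  assumes r'_le: "r' \<le> length ms" and ms_pos: "\<And>i. i < r' \<Longrightarrow> 0 < ms ! i"
begin

definition start :: "nat \<Rightarrow> nat" where "start i = (\<Sum>k<i. ms ! k)"
definition total :: nat where "total = start r'"
definition D :: "(nat \<times> nat) set" where "D = Sigma {..<r'} (\<lambda>i. {..<ms ! i})"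
definition pos :: "nat \<times> nat \<Rightarrow> nat" where
  "pos = (\<lambda>(i,j). if j = 0 then i else r' + (start i - i) + (j - 1))"
definition ipos :: "nat \<Rightarrow> nat \<times> nat" where "ipos = inv_into D pos"
definition jpos :: "nat \<times> nat \<Rightarrow> nat" where "jpos = (\<lambda>(i,j). start i + (ms ! i - 1 - j))"

lemma start_Suc: "start (Suc i) = start i + ms ! i" unfolding start_def by simp

lemma start_ge: "i \<le> r' \<Longrightarrow> i \<le> start i"
proof (induct i)
  case (Suc i) then show ?case using ms_pos[of i] by (simp add: start_Suc)
qed (simp add: start_def)

lemma start_minus_mono: "i \<le> i' \<Longrightarrow> i' \<le> r' \<Longrightarrow> start i - i \<le> start i' - i'"
proof (induct i' rule: dec_induct)
  case (step k)
  have "start k - k \<le> start (Suc k) - Suc k" using ms_pos[of k] step start_ge[of k] by (simp add: start_Suc)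
  then show ?case using step by simp
qed simp

lemma start_mono: "i \<le> i' \<Longrightarrow> start i \<le> start i'"
  unfolding start_def by (rule sum_mono2) auto

lemma total_ge: "r' \<le> total" unfolding total_def using start_ge by simp

lemma D_iff: "(i,j) \<in> D \<longleftrightarrow> i < r' \<and> j < ms ! i" unfolding D_def by auto

lemma pos_0[simp]: "pos (i,0) = i" unfolding pos_def by simp
lemma pos_tail: "0 < j \<Longrightarrow> pos (i,j) = r' + (start i - i) + (j - 1)" unfolding pos_def by simp

lemma pos_lt: assumes "(i,j) \<in> D" shows "pos (i,j) < total"
proof (cases "j = 0")
  case True then show ?thesis using assms total_ge by (auto simp: D_iff)
next
  case False
  have i: "i < r'" "j < ms ! i" using assms by (auto simp: D_iff)
  have "start (Suc i) - Suc i \<le> start r' - r'" using start_minus_mono[of "Suc i" r'] i by simp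
  moreover have "start (Suc i) - Suc i = (start i - i) + (ms ! i - 1)" using start_ge[of i] i ms_pos[of i] by (simp add: start_Suc)
  ultimately show ?thesis using False i total_ge unfolding total_def by (simp add: pos_tail)
qed

lemma pos_ge: "0 < j \<Longrightarrow> r' \<le> pos (i,j)" by (simp add: pos_tail)

lemma pos_inj: "inj_on pos D"
proof (rule inj_onI)
  fix x y assume x: "x \<in> D" and y: "y \<in> D" and e: "pos x = pos y"
  obtain i j where xe: "x = (i,j)" by force
  obtain i' j' where ye: "y = (i',j')" by force
  have xi: "i < r'" "j < ms ! i" and yi: "i' < r'" "j' < ms ! i'" using x y xe ye by (auto simp: D_iff)
  show "x = y"
  proof (cases "j = 0")
    case True
    then show ?thesis using e xe ye xi yi pos_ge[of j' i'] by (cases "j' = 0") auto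
  next
    case False
    then have j': "j' \<noteq> 0" using e xe ye xi yi pos_ge[of j i] by (cases "j' = 0") auto
    have lt: "pos (a,b) < pos (a',b')" if "a < a'" "a' < r'" "0 < b" "b < ms ! a" "0 < b'" for a b a' b'
    proof -
      have "start (Suc a) - Suc a \<le> start a' - a'" using start_minus_mono[of "Suc a" a'] that by simp
      moreover have "start (Suc a) - Suc a = (start a - a) + (ms ! a - 1)" using start_ge[of a] that ms_pos[of a] by (simp add: start_Suc)
      ultimately show ?thesis using that by (simp add: pos_tail)
    qed
    have "i = i'"
    proof (rule ccontr)
      assume "i \<noteq> i'"
      then consider "i < i'" | "i' < i" by linarith
      then show False
        using lt[of i i' j j'] lt[of i' i j' j] e xe ye xi yi False j' by (cases, auto)
    qed
    then show ?thesis using e xe ye False j' by (simp add: pos_tail)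
  qed
qed

lemma card_D: "card D = total"
  unfolding D_def total_def start_def by (simp add: card_SigmaI)

lemma finite_D: "finite D" unfolding D_def by simp

lemma pos_bij: "bij_betw pos D {..<total}"
  using pos_inj pos_lt card_D by (intro bij_betw_lessThan_of_inj) auto

lemma ipos_D: "p < total \<Longrightarrow> ipos p \<in> D"
  unfolding ipos_def using pos_bij by (auto simp: bij_betw_def intro!: inv_into_into)

lemma pos_ipos: "p < total \<Longrightarrow> pos (ipos p) = p"
  unfolding ipos_def using pos_bij by (auto simp: bij_betw_def intro!: f_inv_into_f)

lemma ipos_pos: "x \<in> D \<Longrightarrow> ipos (pos x) = x"
  unfolding ipos_def using pos_inj by (rule inv_into_f_f)

lemma ipos_small: "b < r' \<Longrightarrow> ipos b = (b,0)"
  using ipos_pos[of "(b,0)"] ms_pos[of b] by (auto simp: D_iff)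

lemma ipos_big: assumes "r' \<le> b" "b < total" shows "0 < snd (ipos b)"
proof (rule ccontr)
  assume "\<not> 0 < snd (ipos b)"
  then have "snd (ipos b) = 0" by simp
  then have "pos (ipos b) = fst (ipos b)" by (metis pos_0 prod.collapse)
  moreover have "fst (ipos b) < r'" using ipos_D[of b] assms by (cases "ipos b") (auto simp: D_iff)
  ultimately show False using pos_ipos[of b] assms by simp
qed

lemma sum_D: "(\<Sum>x\<in>D. f x) = (\<Sum>i<r'. \<Sum>j<ms ! i. f (i,j))"
  unfolding D_def by (simp add: sum.Sigma)

lemma sum_reindex: "(\<Sum>p<total. g p) = (\<Sum>x\<in>D. g (pos x))"
  using sum.reindex_bij_betw[OF pos_bij, of g] by simp

lemma jpos_bounds: assumes "(i,j) \<in> D" shows "start i \<le> jpos (i,j)" "jpos (i,j) < start (Suc i)"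
  using assms ms_pos[of i] by (auto simp: jpos_def D_iff start_Suc)

lemma jpos_inj: "inj_on jpos D"
proof (rule inj_onI)
  fix x y assume x: "x \<in> D" and y: "y \<in> D" and e: "jpos x = jpos y"
  obtain i j where xe: "x = (i,j)" by force
  obtain i' j' where ye: "y = (i',j')" by force
  have "i = i'"
  proof (rule ccontr)
    assume "i \<noteq> i'"
    then consider "Suc i \<le> i'" | "Suc i' \<le> i" by linarith
    then show False
    proof cases
      case 1 then show False using jpos_bounds[of i j] jpos_bounds[of i' j'] x y xe ye e start_mono[OF 1] by auto
    next
      case 2 then show False using jpos_bounds[of i j] jpos_bounds[of i' j'] x y xe ye e start_mono[OF 2] by auto
    qed
  qed
  then show "x = y" using e xe ye x y by (auto simp: jpos_def D_iff)
qed

lemma jpos_lt: "x \<in> D \<Longrightarrow> jpos x < total"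
proof -
  assume x: "x \<in> D"
  obtain i j where xe: "x = (i,j)" by force
  have "Suc i \<le> r'" using x xe by (auto simp: D_iff)
  then show ?thesis using jpos_bounds(2)[of i j] x xe start_mono[of "Suc i" r'] unfolding total_def by auto
qed

lemma jpos_bij: "bij_betw jpos D {..<total}"
  using jpos_inj jpos_lt card_D by (intro bij_betw_lessThan_of_inj) auto

end


subsection \<open>The characteristic polynomial of a block companion matrix\<close>

lemma det_permute_cols:
  assumes A: "A \<in> carrier_mat n n" and p: "p permutes {0 ..< (n :: nat)}"
  shows "det (mat n n (\<lambda> (i,j). A $$ (i, p j))) = signof p * det A"
proof -
  have "mat n n (\<lambda> (i,j). A $$ (i, p j))
      = transpose_mat (mat n n (\<lambda> (i,j). transpose_mat A $$ (p i, j)))"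
    using A p by (intro eq_matI) (auto simp: permutes_in_image)
  then have "det (mat n n (\<lambda> (i,j). A $$ (i, p j)))
      = det (mat n n (\<lambda> (i,j). transpose_mat A $$ (p i, j)))"
    by (metis det_transpose mat_carrier)
  also have "\<dots> = signof p * det (transpose_mat A)" by (rule det_permute_rows[OF _ p]) (use A in auto)
  also have "\<dots> = signof p * det A" using A by (simp add: det_transpose)
  finally show ?thesis .
qed

lemma char_poly_matrix_index:
  assumes "B \<in> carrier_mat n n" "a < n" "b < n"
  shows "char_poly_matrix B $$ (a,b) = (if a = b then [:0,1:] else 0) - [: B $$ (a,b) :]"
  using assms by (simp add: char_poly_matrix_def)

lemma monom_mult_X: "monom (1::'a::comm_ring_1) j * [:0,1:] = monom 1 (Suc j)"
proof -
  have "[:0,1:] = monom (1::'a) 1" by (simp add: monom_Suc monom_0)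
  then show ?thesis by (simp add: mult_monom)
qed

lemma monom_mult_const: "monom (1::'a::comm_ring_1) j * [:c:] = monom c j"
proof -
  have "[:c:] = monom c 0" by (simp add: monom_0)
  then show ?thesis by (simp add: mult_monom)
qed

context chain_cells
begin

text \<open>The matrix of x in the basis (A^j v_i) ordered by pos: each cell is sent to its
  successor in the chain, and the last cell of chain i to the vector d i.\<close>
definition companion :: "(nat \<Rightarrow> 'a :: comm_ring_1 vec) \<Rightarrow> 'a mat" where
  "companion d = mat total total (\<lambda>(a,b). if snd (ipos b) + 1 < ms ! fst (ipos b)
      then (if a = pos (fst (ipos b), snd (ipos b) + 1) then 1 else 0) else d (fst (ipos b)) $ a)"

text \<open>The r' x r' relation matrix: t^(m_i) v_i = sum_k (d_k coefficients) t^j v_i.\<close>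
definition relation_mat :: "(nat \<Rightarrow> 'a :: comm_ring_1 vec) \<Rightarrow> 'a poly mat" where
  "relation_mat d = mat r' r' (\<lambda>(i,k). (if i = k then monom 1 (ms ! i) else 0)
      - (\<Sum>j<ms ! i. monom (d k $ pos (i,j)) j))"

text \<open>Unimodular row operation adding t^j times row (i,j) to the head row i.\<close>
definition elim_mat :: "'a :: comm_ring_1 poly mat" where
  "elim_mat = mat total total (\<lambda>(a,b). if a < r'
      then (if fst (ipos b) = a then monom 1 (snd (ipos b)) else 0)
      else (if a = b then 1 else 0))"

text \<open>Cyclic predecessor inside a chain, and the induced permutation of {..<total}: it moves
  the column of each cell's predecessor into the cell's own place.\<close>
definition prev_cell :: "nat \<times> nat \<Rightarrow> nat \<times> nat" where
  "prev_cell = (\<lambda>(i,j). (i, if j = 0 then ms ! i - 1 else j - 1))"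

definition tau :: "nat \<Rightarrow> nat" where
  "tau b = (if b < total then pos (prev_cell (ipos b)) else b)"

definition shifted :: "(nat \<Rightarrow> 'a :: comm_ring_1 vec) \<Rightarrow> 'a poly mat" where
  "shifted d = mat total total (\<lambda>(a,b). (elim_mat * char_poly_matrix (companion d)) $$ (a, tau b))"

lemma prev_cell_bij: "bij_betw prev_cell D D"
proof -
  have "inj_on prev_cell D"
    by (rule inj_onI) (auto simp: prev_cell_def D_iff split: if_splits)
  moreover have "prev_cell ` D \<subseteq> D"
    using ms_pos by (auto simp: prev_cell_def D_iff)
  ultimately show ?thesis
    using endo_inj_surj[OF finite_D] unfolding bij_betw_def by blast
qed

lemma tau_permutes: "tau permutes {0..<total}"
proof (rule bij_imp_permutes)
  have "bij_betw ipos {..<total} D"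
    unfolding ipos_def by (rule bij_betw_inv_into[OF pos_bij])
  then have "bij_betw (pos \<circ> prev_cell \<circ> ipos) {..<total} {..<total}"
    by (rule bij_betw_trans[OF _ bij_betw_trans[OF prev_cell_bij pos_bij]])
  then have "bij_betw tau {..<total} {..<total}"
    by (rule bij_betw_cong[THEN iffD1, rotated]) (simp add: tau_def)
  then show "bij_betw tau {0..<total} {0..<total}" by (simp add: atLeast0LessThan)
qed (simp add: tau_def)

lemma tau_head: "b < r' \<Longrightarrow> tau b = pos (b, ms ! b - 1)"
  using total_ge ipos_small by (simp add: tau_def prev_cell_def)

lemma tau_tail:
  assumes "r' \<le> b" "b < total" "ipos b = (i,j)"
  shows "0 < j" "(i,j) \<in> D" "pos (i,j) = b" "tau b = pos (i, j - 1)" "tau b < b"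
proof -
  show j: "0 < j" and D: "(i,j) \<in> D" and b: "pos (i,j) = b"
    using ipos_big ipos_D pos_ipos assms by force+
  show tb: "tau b = pos (i, j - 1)" using assms j by (simp add: tau_def prev_cell_def)
  show "tau b < b"
  proof (cases "j = 1")
    case True
    then show ?thesis using tb D assms by (auto simp: D_iff)
  next
    case False
    then show ?thesis using tb b j by (simp add: pos_tail)
  qed
qed

lemma elim_mat_carrier: "elim_mat \<in> carrier_mat total total" unfolding elim_mat_def by simp

lemma det_elim_mat: "det (elim_mat :: 'a :: comm_ring_1 poly mat) = 1"
proof -
  have ut: "upper_triangular (elim_mat :: 'a poly mat)"
    unfolding upper_triangular_def elim_mat_def using ipos_small by auto
  have "det (elim_mat :: 'a poly mat) = prod_list (diag_mat elim_mat)"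
    by (rule det_upper_triangular[OF ut elim_mat_carrier])
  also have "\<dots> = (\<Prod>i = 0..<total. (elim_mat :: 'a poly mat) $$ (i, i))"
    by (simp add: prod_list_diag_prod elim_mat_def)
  also have "\<dots> = (\<Prod>i = 0..<total. 1)" by (rule prod.cong) (auto simp: elim_mat_def ipos_small)
  finally show ?thesis by simp
qed

lemma elim_mult_head_row:
  assumes C: "C \<in> carrier_mat total total" and a: "a < r'" and b: "b < total"
  shows "(elim_mat * C) $$ (a,b) = (\<Sum>j<ms ! a. monom 1 j * C $$ (pos (a,j), b))"
proof -
  have a': "a < total" using a total_ge by simp
  have "(elim_mat * C) $$ (a,b) = (\<Sum>c<total. elim_mat $$ (a,c) * C $$ (c,b))"
    using C a' b by (simp add: elim_mat_def scalar_prod_def atLeast0LessThan)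
  also have "\<dots> = (\<Sum>i<r'. \<Sum>j<ms ! i. elim_mat $$ (a,pos (i,j)) * C $$ (pos (i,j),b))"
    by (simp only: sum_reindex sum_D)
  also have "\<dots> = (\<Sum>i<r'. if i = a then (\<Sum>j<ms ! i. monom 1 j * C $$ (pos (i,j),b)) else 0)"
  proof (intro sum.cong refl)
    fix i assume i: "i \<in> {..<r'}"
    show "(\<Sum>j<ms ! i. elim_mat $$ (a,pos (i,j)) * C $$ (pos (i,j),b)) =
          (if i = a then (\<Sum>j<ms ! i. monom 1 j * C $$ (pos (i,j),b)) else 0)"
      using i a a' pos_lt ipos_pos by (auto simp: elim_mat_def D_iff intro!: sum.cong)
  qed
  also have "\<dots> = (\<Sum>j<ms ! a. monom 1 j * C $$ (pos (a,j), b))" using a by simp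
  finally show ?thesis .
qed

lemma elim_mult_tail_row:
  assumes C: "C \<in> carrier_mat total total" and a: "r' \<le> a" "a < total" and b: "b < total"
  shows "(elim_mat * C) $$ (a,b) = C $$ (a,b)"
proof -
  have "(elim_mat * C) $$ (a,b) = (\<Sum>i = 0..<total. (if a = i then 1 else 0) * C $$ (i, b))"
    using C a b by (simp add: elim_mat_def scalar_prod_def)
  also have "\<dots> = (\<Sum>i\<in>{0..<total}. (if i = a then C $$ (i,b) else 0))" by (rule sum.cong) auto
  finally show ?thesis using a by simp
qed

lemma companion_carrier: "companion d \<in> carrier_mat total total"
  unfolding companion_def by simp

lemma companion_last:
  assumes "i < r'" "a < total"
  shows "companion d $$ (a, pos (i, ms ! i - 1)) = d i $ a"
proof -
  have D: "(i, ms ! i - 1) \<in> D" using assms ms_pos[of i] by (auto simp: D_iff)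
  show ?thesis using assms ipos_pos[OF D] pos_lt[OF D] ms_pos[of i] by (simp add: companion_def)
qed

lemma companion_inner:
  assumes "(i,j) \<in> D" "Suc j < ms ! i" "a < total"
  shows "companion d $$ (a, pos (i, j)) = (if a = pos (i, Suc j) then 1 else 0)"
  using assms ipos_pos[OF assms(1)] pos_lt[OF assms(1)] by (simp add: companion_def)

lemma companion_tau_tail:
  assumes b: "r' \<le> b" "b < total" and x: "x < total"
  shows "companion d $$ (x, tau b) = (if x = b then 1 else 0)"
proof -
  obtain i j where ij: "ipos b = (i,j)" by force
  note t = tau_tail[OF b ij]
  have D1: "(i, j - 1) \<in> D" using t(2) by (auto simp: D_iff)
  have "companion d $$ (x, pos (i, j - 1)) = (if x = pos (i, Suc (j - 1)) then 1 else 0)"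
    by (rule companion_inner[OF D1 _ x]) (use t in \<open>auto simp: D_iff\<close>)
  then show ?thesis using t by simp
qed

lemma dim_shifted [simp]: "dim_row (shifted d) = total" "dim_col (shifted d) = total"
  unfolding shifted_def by simp_all

lemma dim_relation_mat [simp]: "dim_row (relation_mat d) = r'" "dim_col (relation_mat d) = r'"
  unfolding relation_mat_def by simp_all

lemma shifted_head_row:
  assumes a: "a < r'" and b: "b < total"
  shows "shifted d $$ (a,b) = (\<Sum>j<ms ! a. monom 1 j *
    ((if pos (a,j) = tau b then [:0,1:] else 0) - [: companion d $$ (pos (a,j), tau b) :]))"
proof -
  have tb: "tau b < total" using tau_permutes b by (simp add: permutes_in_image)
  have "shifted d $$ (a,b) = (\<Sum>j<ms ! a. monom 1 j * char_poly_matrix (companion d) $$ (pos (a,j), tau b))"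
    using a b total_ge elim_mult_head_row[OF char_poly_matrix_closed[OF companion_carrier] a tb]
    by (simp add: shifted_def)
  also have "\<dots> = (\<Sum>j<ms ! a. monom 1 j *
    ((if pos (a,j) = tau b then [:0,1:] else 0) - [: companion d $$ (pos (a,j), tau b) :]))"
    using a pos_lt tb by (intro sum.cong refl) (simp add: char_poly_matrix_index[OF companion_carrier] D_iff)
  finally show ?thesis .
qed

lemma shifted_tail_row:
  assumes a: "r' \<le> a" "a < total" and b: "b < total"
  shows "shifted d $$ (a,b) = (if a = tau b then [:0,1:] else 0) - [: companion d $$ (a, tau b) :]"
proof -
  have tb: "tau b < total" using tau_permutes b by (simp add: permutes_in_image)
  have "shifted d $$ (a,b) = char_poly_matrix (companion d) $$ (a, tau b)"
    using a b tb elim_mult_tail_row[OF char_poly_matrix_closed[OF companion_carrier] a tb]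
    by (simp add: shifted_def)
  also have "\<dots> = (if a = tau b then [:0,1:] else 0) - [: companion d $$ (a, tau b) :]"
    by (rule char_poly_matrix_index[OF companion_carrier a(2) tb])
  finally show ?thesis .
qed

text \<open>In the non-head columns the head rows telescope to zero: t^(j-1) t - t^j.\<close>
lemma shifted_upper_right:
  assumes a: "a < r'" and b: "r' \<le> b" "b < total"
  shows "shifted d $$ (a,b) = 0"
proof -
  obtain i j where ij: "ipos b = (i,j)" by force
  note t = tau_tail[OF b ij]
  have D1: "(i, j - 1) \<in> D" using t(2) by (auto simp: D_iff)
  have hj: "monom 1 (j - 1) * [:0,1:] = (monom 1 j :: 'a poly)" using monom_mult_X[of "j - 1"] t(1) by simp
  have "shifted d $$ (a,b) = (\<Sum>j'<ms ! a. (if (a,j') = (i, j - 1) then monom 1 j else 0)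
      - (if (a,j') = (i,j) then monom 1 j else 0))"
    unfolding shifted_head_row[OF a b(2)]
  proof (intro sum.cong refl)
    fix j' assume j': "j' \<in> {..<ms ! a}"
    have Daj: "(a,j') \<in> D" using a j' by (auto simp: D_iff)
    have e1: "pos (a,j') = pos (i, j - 1) \<longleftrightarrow> (a,j') = (i, j - 1)"
      using pos_inj Daj D1 by (auto dest: inj_onD)
    have e2: "pos (a,j') = b \<longleftrightarrow> (a,j') = (i, j)"
      using pos_inj Daj t(2,3) by (auto dest: inj_onD)
    have c: "companion d $$ (pos (a,j'), tau b) = (if (a,j') = (i,j) then 1 else 0)"
      using companion_tau_tail[OF b pos_lt[OF Daj], of d] unfolding e2 .
    show "monom 1 j' * ((if pos (a,j') = tau b then [:0,1:] else 0) - [: companion d $$ (pos (a,j'), tau b) :])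
      = (if (a,j') = (i, j - 1) then monom 1 j else 0) - (if (a,j') = (i,j) then monom 1 j else 0)"
      unfolding c unfolding t(4) e1 using hj t(1) by (cases "(a,j') = (i, j - 1)") (auto simp: one_pCons)
  qed
  also have "\<dots> = 0"
  proof (cases "a = i")
    case True
    then show ?thesis using t(1,2) by (simp add: sum_subtractf D_iff, arith)
  qed (simp add: sum_subtractf)
  finally show ?thesis .
qed

lemma shifted_lower_right:
  assumes "r' \<le> b" "b \<le> a" "a < total"
  shows "shifted d $$ (a,b) = (if a = b then -1 else 0)"
proof -
  have "tau b < b" using assms tau_tail(5)[of b "fst (ipos b)" "snd (ipos b)"] by simp
  then show ?thesis
    using assms shifted_tail_row[of a b d] companion_tau_tail[of b a d] by (simp add: one_pCons)
qed

lemma shifted_upper_left: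
  assumes a: "a < r'" and b: "b < r'"
  shows "shifted d $$ (a,b) = relation_mat d $$ (a,b)"
proof -
  have Db: "(b, ms ! b - 1) \<in> D" using b ms_pos[of b] by (auto simp: D_iff)
  have b': "b < total" using b total_ge by simp
  have "shifted d $$ (a,b) = (\<Sum>j<ms ! a. (if (a,j) = (b, ms ! b - 1) then monom 1 (ms ! a) else 0)
      - monom (d b $ pos (a,j)) j)"
    unfolding shifted_head_row[OF a b']
  proof (intro sum.cong refl)
    fix j assume j: "j \<in> {..<ms ! a}"
    have Daj: "(a,j) \<in> D" using a j by (auto simp: D_iff)
    have e1: "pos (a,j) = pos (b, ms ! b - 1) \<longleftrightarrow> (a,j) = (b, ms ! b - 1)"
      using pos_inj Daj Db by (auto dest: inj_onD)
    have last: "companion d $$ (pos (a,j), tau b) = d b $ pos (a,j)"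
      using companion_last[OF b pos_lt[OF Daj]] tau_head[OF b] by simp
    have X: "(a,j) = (b, ms ! b - 1) \<Longrightarrow> monom 1 j * [:0,1:] = (monom 1 (ms ! a) :: 'a poly)"
      using monom_mult_X[of j] ms_pos[of a] a by simp
    show "monom 1 j * ((if pos (a,j) = tau b then [:0,1:] else 0) - [: companion d $$ (pos (a,j), tau b) :])
      = (if (a,j) = (b, ms ! b - 1) then monom 1 (ms ! a) else 0) - monom (d b $ pos (a,j)) j"
    proof (cases "(a,j) = (b, ms ! b - 1)")
      case True
      show ?thesis unfolding last unfolding tau_head[OF b] e1 if_P[OF True]
        by (simp only: right_diff_distrib X[OF True] monom_mult_const)
    next
      case False
      show ?thesis unfolding last unfolding tau_head[OF b] e1 if_not_P[OF False]
        by (simp only: right_diff_distrib monom_mult_const mult_zero_right)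
    qed
  qed
  also have "\<dots> = relation_mat d $$ (a,b)"
    using a b ms_pos[of a] by (auto simp: sum_subtractf relation_mat_def)
  finally show ?thesis .
qed

lemma det_shifted_lower_right_block:
  "det (mat (total - r') (total - r') (\<lambda>(a,b). shifted d $$ (a + r', b + r')))
     = (-1 :: 'a :: comm_ring_1 poly) ^ (total - r')"
  (is "det ?LR = _")
proof -
  have LR: "?LR \<in> carrier_mat (total - r') (total - r')" by simp
  have "upper_triangular ?LR"
  proof (unfold upper_triangular_def, intro allI impI)
    fix a b assume "a < dim_row ?LR" "b < a"
    then show "?LR $$ (a,b) = 0"
      using shifted_lower_right[of "b + r'" "a + r'" d] by (simp add: less_diff_conv)
  qed
  then have "det ?LR = prod_list (diag_mat ?LR)" by (rule det_upper_triangular[OF _ LR])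
  also have "\<dots> = (\<Prod>i = 0..<total - r'. -1)"
    unfolding prod_list_diag_prod
  proof (intro prod.cong)
    fix a assume "a \<in> {0..<total - r'}"
    then show "?LR $$ (a,a) = -1"
      using shifted_lower_right[of "a + r'" "a + r'" d] by (simp add: less_diff_conv)
  qed simp
  finally show ?thesis by simp
qed

lemma det_char_companion_signed:
  fixes d :: "nat \<Rightarrow> 'a :: idom vec"
  shows "signof tau * det (char_poly_matrix (companion d)) = det (relation_mat d) * (-1) ^ (total - r')"
proof -
  define LL where "LL = mat (total - r') r' (\<lambda>(a,b). shifted d $$ (a + r',b))"
  define LR where "LR = mat (total - r') (total - r') (\<lambda>(a,b). shifted d $$ (a + r',b + r'))"
  have C: "char_poly_matrix (companion d) \<in> carrier_mat total total"
    by (rule char_poly_matrix_closed[OF companion_carrier])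
  have "signof tau * det (char_poly_matrix (companion d)) = det (shifted d)"
    unfolding shifted_def det_permute_cols[OF mult_carrier_mat[OF elim_mat_carrier C] tau_permutes]
      det_mult[OF elim_mat_carrier C] det_elim_mat by simp
  also have "shifted d = four_block_mat (relation_mat d) (0\<^sub>m r' (total - r')) LL LR"
    using total_ge shifted_upper_right shifted_upper_left
    by (intro eq_matI) (auto simp: LL_def LR_def not_less)
  also have "det \<dots> = det (relation_mat d) * det LR"
    by (rule det_four_block_mat_upper_right_zero) (auto simp: LL_def LR_def carrier_matI)
  also have "det LR = (-1) ^ (total - r')"
    unfolding LR_def by (rule det_shifted_lower_right_block)
  finally show ?thesis .
qed

lemma pos_Suc_gt: "(i, Suc j) \<in> D \<Longrightarrow> pos (i,j) < pos (i, Suc j)"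
  using pos_ge[of "Suc 0" i] by (cases j) (auto simp: D_iff pos_tail)

text \<open>To determine the sign of tau we evaluate at d = 0, where both sides are triangular.\<close>
lemma companion_zero_lower:
  assumes a: "a \<le> b" "b < total"
  shows "companion (\<lambda>_. 0\<^sub>v total) $$ (a,b) = (0 :: 'a :: comm_ring_1)"
proof -
  obtain i j where ij: "ipos b = (i,j)" by force
  have D: "(i,j) \<in> D" using ipos_D[of b] a ij by simp
  have "pos (i,j) = b" using pos_ipos[of b] a ij by simp
  then have "Suc j < ms ! i \<Longrightarrow> a \<noteq> pos (i, Suc j)"
    using pos_Suc_gt[of i j] D a by (auto simp: D_iff)
  then show ?thesis using a ij by (auto simp: companion_def)
qed

lemma det_char_companion_zero:
  "det (char_poly_matrix (companion (\<lambda>_. 0\<^sub>v total))) = ([:0,1:] :: 'a :: idom poly) ^ total"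
proof -
  define C0 :: "'a poly mat" where "C0 = char_poly_matrix (companion (\<lambda>_. 0\<^sub>v total))"
  have C0: "C0 \<in> carrier_mat total total"
    unfolding C0_def by (rule char_poly_matrix_closed[OF companion_carrier])
  have C0idx: "C0 $$ (a,b) = (if a = b then [:0,1:] else 0)" if "a \<le> b" "b < total" for a b
  proof -
    have a: "a < total" using that by simp
    show ?thesis unfolding C0_def char_poly_matrix_index[OF companion_carrier a that(2)]
      companion_zero_lower[OF that] by simp
  qed
  have "det C0 = prod_list (diag_mat C0)"
    by (rule det_lower_triangular[OF _ C0]) (simp add: C0idx)
  also have "\<dots> = (\<Prod>i = 0..<total. [:0,1:])"
    unfolding prod_list_diag_prod using C0 C0idx by (intro prod.cong) auto
  finally show ?thesis unfolding C0_def by simp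
qed

lemma det_relation_mat_zero:
  "det (relation_mat (\<lambda>_. 0\<^sub>v total)) = ([:0,1:] :: 'a :: idom poly) ^ total"
proof -
  define X0 :: "'a poly mat" where "X0 = relation_mat (\<lambda>_. 0\<^sub>v total)"
  have X0: "X0 \<in> carrier_mat r' r'" unfolding X0_def relation_mat_def by simp
  have X0idx: "X0 $$ (i,k) = (if i = k then monom 1 (ms ! i) else 0)" if "i < r'" "k < r'" for i k
    using that pos_lt unfolding X0_def relation_mat_def by (auto simp: D_iff intro!: sum.neutral)
  have "det X0 = prod_list (diag_mat X0)"
    by (rule det_upper_triangular[OF _ X0]) (use X0idx X0 in \<open>auto simp: upper_triangular_def\<close>)
  also have "\<dots> = (\<Prod>i = 0..<r'. [:0,1:] ^ (ms ! i))"
    unfolding prod_list_diag_prod using X0 X0idx by (intro prod.cong) (auto simp: monom_altdef)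
  also have "\<dots> = [:0,1:] ^ total" unfolding total_def start_def by (simp add: power_sum atLeast0LessThan)
  finally show ?thesis unfolding X0_def .
qed

lemma signof_tau: "signof tau = (-1 :: 'a :: idom poly) ^ (total - r')"
proof -
  have "signof tau * det (char_poly_matrix (companion (\<lambda>_. 0\<^sub>v total)))
      = det (relation_mat (\<lambda>_. 0\<^sub>v total)) * (-1 :: 'a poly) ^ (total - r')"
    by (rule det_char_companion_signed)
  then have "signof tau * [:0,1:] ^ total = ([:0,1:] :: 'a poly) ^ total * (-1) ^ (total - r')"
    unfolding det_char_companion_zero det_relation_mat_zero .
  then show ?thesis by (simp add: mult.commute)
qed

theorem det_char_companion:
  fixes d :: "nat \<Rightarrow> 'a :: idom vec"
  shows "det (char_poly_matrix (companion d)) = det (relation_mat d)"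
proof -
  have "(-1 :: 'a poly) ^ (total - r') * det (char_poly_matrix (companion d))
      = det (relation_mat d) * (-1) ^ (total - r')"
    using det_char_companion_signed[of d] unfolding signof_tau .
  then show ?thesis by (simp add: mult.commute)
qed

end

subsection \<open>Columns of a nilpotent Jordan matrix\<close>

lemma jordan_matrix_Cons: "jordan_matrix ((n,a) # xs) = four_block_mat (jordan_block n a)
   (0\<^sub>m n (sum_list (map fst xs))) (0\<^sub>m (sum_list (map fst xs)) n) (jordan_matrix xs)"
  using jordan_matrix_dim[of xs] unfolding jordan_matrix_def by (simp add: Let_def)

lemma sum_list_take_add_less:
  fixes ns :: "nat list"
  assumes "i < length ns" "k < ns ! i"
  shows "sum_list (take i ns) + k < sum_list ns"
proof -
  have "sum_list ns = sum_list (take (Suc i) ns) + sum_list (drop (Suc i) ns)"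
    by (metis append_take_drop_id sum_list_append)
  moreover have "sum_list (take (Suc i) ns) = sum_list (take i ns) + ns ! i"
    using assms by (simp add: take_Suc_conv_app_nth)
  ultimately show ?thesis using assms by linarith
qed

lemma jordan_matrix_nilpotent_Cons_index:
  assumes "x < m + sum_list ns" "y < m + sum_list ns"
  shows "jordan_matrix (map (\<lambda>m. (m, 0::'k::field)) (m # ns)) $$ (x,y)
    = (if x < m then if y < m then jordan_block m 0 $$ (x,y) else 0
       else if y < m then 0 else jordan_matrix (map (\<lambda>m. (m,0::'k)) ns) $$ (x - m, y - m))"
proof -
  have sm: "sum_list (map fst (map (\<lambda>m. (m, 0::'k)) ns)) = sum_list ns" by (induct ns) auto
  note JC = jordan_matrix_Cons[of m "0::'k" "map (\<lambda>m. (m, 0::'k)) ns", unfolded sm]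
  have dJ: "dim_row (jordan_matrix (map (\<lambda>m. (m, 0::'k)) ns)) = sum_list ns"
      "dim_col (jordan_matrix (map (\<lambda>m. (m, 0::'k)) ns)) = sum_list ns" using sm by simp_all
  show ?thesis
    using assms unfolding list.map(2) JC by (subst index_mat_four_block(1)) (auto simp: dJ comp_def)
qed

lemma jordan_matrix_nilpotent_col:
  assumes "i < length ns" "k < ns ! i" "a < sum_list ns"
  shows "jordan_matrix (map (\<lambda>m. (m, 0::'k::field)) ns) $$ (a, sum_list (take i ns) + k) =
    (if 0 < k \<and> a = sum_list (take i ns) + k - 1 then 1 else 0)"
  using assms
proof (induct ns arbitrary: i a)
  case Nil then show ?case by simp
next
  case (Cons m ns)
  note idx = jordan_matrix_nilpotent_Cons_index[where 'k = 'k and m = m and ns = ns]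
  show ?case
  proof (cases i)
    case 0
    then have k: "k < m" using Cons by simp
    have kk: "k < m + sum_list ns" using k by simp
    show ?thesis
    proof (cases "a < m")
      case True then show ?thesis using Cons(4) k 0 idx[OF _ kk] by (simp, arith)
    next
      case False
      have "a \<noteq> k - 1" using False k by linarith
      then show ?thesis using Cons(4) k 0 idx[OF _ kk] False by simp
    qed
  next
    case (Suc i')
    have i': "i' < length ns" "k < ns ! i'" using Cons Suc by auto
    have col: "sum_list (take i (m # ns)) + k = m + (sum_list (take i' ns) + k)" using Suc by simp
    have bnd: "sum_list (take i' ns) + k < sum_list ns" using sum_list_take_add_less[OF i'] .
    show ?thesis
    proof (cases "a < m")
      case True
      then show ?thesis unfolding col using Cons(4) bnd idx by auto
    next
      case False
      have a': "a - m < sum_list ns" using Cons(4) False by simp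
      have "jordan_matrix (map (\<lambda>m. (m, 0::'k)) (m # ns)) $$ (a, m + (sum_list (take i' ns) + k))
          = jordan_matrix (map (\<lambda>m. (m, 0::'k)) ns) $$ (a - m, sum_list (take i' ns) + k)"
        using False Cons(4) bnd idx by auto
      also have "\<dots> = (if 0 < k \<and> a - m = sum_list (take i' ns) + k - 1 then 1 else 0)"
        by (rule Cons(1)[OF i' a'])
      finally show ?thesis unfolding col using False by auto
    qed
  qed
qed


subsection \<open>Presentations from a basis adapted to the chains\<close>

text \<open>A scalar times the identity that factors as X Y also factors as Y X, provided
  det X is not a zero divisor; the adjugate of X gives the other factor.\<close>
lemma right_factor_commutes:
  fixes X Y :: "'a :: idom mat"
  assumes X: "X \<in> carrier_mat r r" and Y: "Y \<in> carrier_mat r r"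
    and XY: "X * Y = f \<cdot>\<^sub>m 1\<^sub>m r" and dX: "det X \<noteq> 0"
  shows "Y * X = f \<cdot>\<^sub>m 1\<^sub>m r"
proof -
  note adj = adj_mat[OF X]
  let ?adj = "adj_mat X"
  have adjY: "det X \<cdot>\<^sub>m Y = f \<cdot>\<^sub>m ?adj"
  proof -
    have "det X \<cdot>\<^sub>m Y = (?adj * X) * Y" using adj(3) Y by (simp add: mult_smult_assoc_mat[of "1\<^sub>m r" r r Y r])
    also have "\<dots> = ?adj * (X * Y)" using adj(1) X Y by (simp add: assoc_mult_mat[of _ r r _ r _ r])
    also have "\<dots> = f \<cdot>\<^sub>m ?adj" unfolding XY using adj(1) by (simp add: mult_smult_distrib[of _ r r _ r])
    finally show ?thesis .
  qed
  have h: "det X \<cdot>\<^sub>m (Y * X) = det X \<cdot>\<^sub>m (f \<cdot>\<^sub>m 1\<^sub>m r)"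
  proof -
    have "det X \<cdot>\<^sub>m (Y * X) = (det X \<cdot>\<^sub>m Y) * X" using Y X by (simp add: mult_smult_assoc_mat)
    also have "\<dots> = f \<cdot>\<^sub>m (?adj * X)" unfolding adjY using adj(1) X by (simp add: mult_smult_assoc_mat)
    also have "\<dots> = det X \<cdot>\<^sub>m (f \<cdot>\<^sub>m 1\<^sub>m r)" unfolding adj(3) by (intro eq_matI) auto
    finally show ?thesis .
  qed
  show ?thesis
  proof (rule eq_matI)
    fix i k assume "i < dim_row (f \<cdot>\<^sub>m 1\<^sub>m r)" "k < dim_col (f \<cdot>\<^sub>m 1\<^sub>m r)"
    then have i: "i < r" and k: "k < r" by auto
    have "det X * (Y * X) $$ (i,k) = det X * (f \<cdot>\<^sub>m 1\<^sub>m r) $$ (i,k)"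
      using arg_cong[OF h, of "\<lambda>M. M $$ (i,k)"] i k Y X by simp
    then show "(Y * X) $$ (i,k) = (f \<cdot>\<^sub>m 1\<^sub>m r) $$ (i,k)" using dX by simp
  qed (use Y X in auto)
qed

text \<open>Setting: the vectors A^j v_i (i < r', j < ms!i), listed in the order pos, are the
  columns of an invertible matrix W with inverse W'; the remaining generators v_i
  (r' \<le> i < r) are zero and have ms!i = 0.  Then x acts in this basis by the companion
  matrix of the coordinate vectors tail k of A^(ms!k) v_k, and the presentation
  S[t]^r \<rightarrow> S^n, e_i \<mapsto> v_i has kernel Xrel S[t]^r, where Xrel is relation_mat tail
  padded by an identity block.\<close>
locale adapted_basis = chain_cells ms r' for ms r' +
  fixes A :: "'a :: idom mat" and r :: nat and vs :: "'a vec list" and W W' :: "'a mat"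
  assumes A: "A \<in> carrier_mat total total"
    and ms_len: "length ms = r"
    and vs_len: "length vs = r" and vs_car: "set vs \<subseteq> carrier_vec total"
    and vs0: "\<And>i. r' \<le> i \<Longrightarrow> i < r \<Longrightarrow> vs ! i = 0\<^sub>v total"
    and ms0: "\<And>i. r' \<le> i \<Longrightarrow> i < r \<Longrightarrow> ms ! i = 0"
    and W_def: "W = mat total total (\<lambda>(a,p). (A ^\<^sub>m (snd (ipos p)) *\<^sub>v (vs ! fst (ipos p))) $ a)"
    and W': "W' \<in> carrier_mat total total" and WW': "W * W' = 1\<^sub>m total" and W'W: "W' * W = 1\<^sub>m total"
begin

definition chain_vec :: "nat \<Rightarrow> nat \<Rightarrow> 'a vec" where "chain_vec i j = A ^\<^sub>m j *\<^sub>v (vs ! i)"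

definition tail :: "nat \<Rightarrow> 'a vec" where "tail k = W' *\<^sub>v chain_vec k (ms ! k)"

definition Xrel :: "'a poly mat" where
  "Xrel = mat r r (\<lambda>(i,k). if i < r' \<and> k < r' then relation_mat tail $$ (i,k) else (if i = k then 1 else 0))"

text \<open>Coordinates in the basis W of the image of a reduced q (deg q_i < ms!i).\<close>
definition coords :: "'a poly vec \<Rightarrow> 'a vec" where
  "coords q = vec total (\<lambda>p. coeff (q $ fst (ipos p)) (snd (ipos p)))"

definition low_degree :: "nat \<Rightarrow> 'a poly vec \<Rightarrow> bool" where
  "low_degree c q \<longleftrightarrow> (\<forall>i<r. \<forall>j\<ge>ms ! i + c. coeff (q $ i) j = 0)"

lemma r'_le_r: "r' \<le> r" using r'_le ms_len by simp

lemma vs_carrier: "i < r \<Longrightarrow> vs ! i \<in> carrier_vec total"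
  using vs_car vs_len nth_mem by blast

lemma chain_vec_carrier: "i < r \<Longrightarrow> chain_vec i j \<in> carrier_vec total"
  unfolding chain_vec_def using vs_carrier A by (rule pow_mat_mult_vec_carrier[rotated])

lemma chain_vec_zero: "r' \<le> i \<Longrightarrow> i < r \<Longrightarrow> chain_vec i j = 0\<^sub>v total"
  unfolding chain_vec_def using vs0 A by (simp add: mult_mat_vec_zero)

lemma W_carrier: "W \<in> carrier_mat total total" unfolding W_def by simp

lemma ipos_bounds: "p < total \<Longrightarrow> fst (ipos p) < r' \<and> snd (ipos p) < ms ! fst (ipos p)"
  using ipos_D[of p] by (cases "ipos p") (auto simp: D_iff)

lemma W_index: "a < total \<Longrightarrow> p < total \<Longrightarrow> W $$ (a,p) = chain_vec (fst (ipos p)) (snd (ipos p)) $ a"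
  unfolding W_def chain_vec_def by simp

lemma W_col:
  assumes p: "p < total"
  shows "col W p = chain_vec (fst (ipos p)) (snd (ipos p))"
proof -
  have "chain_vec (fst (ipos p)) (snd (ipos p)) \<in> carrier_vec total"
    using chain_vec_carrier ipos_bounds[OF p] r'_le_r by simp
  then show ?thesis using p W_carrier W_index by (intro eq_vecI) auto
qed

lemma W_mult_vec_nth:
  assumes c: "c \<in> carrier_vec total" and a: "a < total"
  shows "(W *\<^sub>v c) $ a = (\<Sum>p<total. chain_vec (fst (ipos p)) (snd (ipos p)) $ a * c $ p)"
  using mult_mat_vec_nth_sum[OF W_carrier c a] W_index a by simp

lemma ms_le_total: "i < r \<Longrightarrow> ms ! i \<le> total"
proof (cases "i < r'")
  case True
  then show ?thesis unfolding total_def start_def using member_le_sum[of i "{..<r'}" "\<lambda>k. ms ! k"] by simp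
qed (simp add: ms0)

lemma sum_chain_cells: fixes h :: "nat \<Rightarrow> nat \<Rightarrow> 'b :: comm_monoid_add"
  assumes N: "\<And>i. i < r \<Longrightarrow> ms ! i \<le> N"
  and h0: "\<And>i j. i < r \<Longrightarrow> j < N \<Longrightarrow> \<not> (i < r' \<and> j < ms ! i) \<Longrightarrow> h i j = 0"
  shows "(\<Sum>i<r. \<Sum>j<N. h i j) = (\<Sum>p<total. h (fst (ipos p)) (snd (ipos p)))"
proof -
  have "(\<Sum>i<r. \<Sum>j<N. h i j) = (\<Sum>i<r'. \<Sum>j<N. h i j)"
    by (rule sum.mono_neutral_right) (use r'_le_r h0 in auto)
  also have "\<dots> = (\<Sum>i<r'. \<Sum>j<ms ! i. h i j)"
  proof (rule sum.cong, simp)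
    fix i assume i: "i \<in> {..<r'}"
    show "(\<Sum>j<N. h i j) = (\<Sum>j<ms ! i. h i j)"
    proof (rule sum.mono_neutral_right)
      have "ms ! i \<le> N" using N[of i] i r'_le_r by simp
      then show "{..<ms ! i} \<subseteq> {..<N}" by auto
      show "\<forall>j\<in>{..<N} - {..<ms ! i}. h i j = 0" using h0 i r'_le_r by auto
    qed simp
  qed
  also have "\<dots> = (\<Sum>x\<in>D. h (fst x) (snd x))" by (simp add: sum_D)
  also have "\<dots> = (\<Sum>p<total. h (fst (ipos p)) (snd (ipos p)))"
    by (simp add: sum_reindex ipos_pos)
  finally show ?thesis .
qed

lemma pres_map_nth_chain_vec:
  assumes a: "a < total" and N: "\<forall>i<r. \<forall>j\<ge>N. coeff (q $ i) j = 0"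
  shows "pres_map A vs q $ a = (\<Sum>i<r. \<Sum>j<N. coeff (q $ i) j * chain_vec i j $ a)"
  using pres_map_nth_coeffs[OF A vs_car a] N vs_len unfolding chain_vec_def by simp

lemma pres_map_reduced: assumes q: "\<forall>i<r. \<forall>j\<ge>ms ! i. coeff (q $ i) j = 0"
  shows "pres_map A vs q = W *\<^sub>v coords q"
proof (rule eq_vecI)
  have coords: "coords q \<in> carrier_vec total" unfolding coords_def by simp
  show "dim_vec (pres_map A vs q) = dim_vec (W *\<^sub>v coords q)"
    using pres_map_carrier[OF A vs_car] W_carrier by simp
  fix a assume "a < dim_vec (W *\<^sub>v coords q)"
  then have a: "a < total" using W_carrier by simp
  have N: "\<forall>i<r. \<forall>j\<ge>total. coeff (q $ i) j = 0" using q ms_le_total by force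
  have "pres_map A vs q $ a = (\<Sum>i<r. \<Sum>j<total. coeff (q $ i) j * chain_vec i j $ a)" by (rule pres_map_nth_chain_vec[OF a N])
  also have "\<dots> = (\<Sum>p<total. coeff (q $ fst (ipos p)) (snd (ipos p)) * chain_vec (fst (ipos p)) (snd (ipos p)) $ a)"
    by (rule sum_chain_cells) (use ms_le_total q chain_vec_zero a in auto)
  also have "\<dots> = (W *\<^sub>v coords q) $ a"
    unfolding W_mult_vec_nth[OF coords a] by (rule sum.cong) (auto simp: coords_def)
  finally show "pres_map A vs q $ a = (W *\<^sub>v coords q) $ a" .
qed

lemma pres_map_surj: assumes w: "w \<in> carrier_vec total" shows "\<exists>q\<in>carrier_vec r. w = pres_map A vs q"
proof -
  define c where "c = W' *\<^sub>v w"
  have c: "c \<in> carrier_vec total" unfolding c_def using W' w by simp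
  define q where "q = vec r (\<lambda>i. if i < r' then (\<Sum>j<ms ! i. monom (c $ pos (i,j)) j) else 0)"
  have qc: "coeff (q $ i) j = (if i < r' \<and> j < ms ! i then c $ pos (i,j) else 0)" if "i < r" for i j
    using that unfolding q_def by (auto simp: coeff_sum)
  have cvq: "coords q = c"
  proof (rule eq_vecI)
    fix p assume "p < dim_vec c"
    then have p: "p < total" using c by simp
    then show "coords q $ p = c $ p" using qc[of "fst (ipos p)" "snd (ipos p)"] ipos_bounds[OF p] r'_le_r pos_ipos[OF p]
      unfolding coords_def by simp
  qed (use c in \<open>simp add: coords_def\<close>)
  have "pres_map A vs q = W *\<^sub>v coords q" by (rule pres_map_reduced) (use qc in auto)
  also have "\<dots> = (W * W') *\<^sub>v w" unfolding cvq c_def using W_carrier W' w by simp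
  also have "\<dots> = w" using WW' w by simp
  finally show ?thesis unfolding q_def by (intro bexI[of _ q]) (auto simp: q_def)
qed

lemma Xrel_carrier: "Xrel \<in> carrier_mat r r" unfolding Xrel_def by simp

lemma Xrel_coeff: assumes i: "i < r" and k: "k < r"
  shows "coeff (Xrel $$ (i,k)) j = (if i = k \<and> j = ms ! i then 1 else 0)
     - (if i < r' \<and> k < r' \<and> j < ms ! i then tail k $ pos (i,j) else 0)"
proof (cases "i < r' \<and> k < r'")
  case True
  have "coeff (Xrel $$ (i,k)) j = coeff ((if i = k then monom 1 (ms ! i) else 0) - (\<Sum>j'<ms ! i. monom (tail k $ pos (i,j')) j')) j"
    using True i k by (simp add: Xrel_def relation_mat_def)
  also have "\<dots> = (if i = k \<and> j = ms ! i then 1 else 0) - (\<Sum>j'<ms ! i. if j = j' then tail k $ pos (i,j') else 0)"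
    by (simp add: coeff_sum coeff_monom)
  also have "(\<Sum>j'<ms ! i. if j = j' then tail k $ pos (i,j') else 0) = (if j < ms ! i then tail k $ pos (i,j) else 0)"
    by (simp add: sum.delta)
  finally show ?thesis using True by simp
next
  case False
  have m: "i = k \<Longrightarrow> ms ! i = 0" using False i ms0 by auto
  show ?thesis using False i k m by (auto simp: Xrel_def coeff_1)
qed

lemma Xrel_coeff_high: "i < r \<Longrightarrow> k < r \<Longrightarrow> ms ! i \<le> j \<Longrightarrow> coeff (Xrel $$ (i,k)) j = (if i = k \<and> j = ms ! i then 1 else 0)"
  using Xrel_coeff by simp

lemma tail_carrier: "k < r \<Longrightarrow> tail k \<in> carrier_vec total"
  unfolding tail_def using W' chain_vec_carrier by simp

lemma col_Xrel: "k < r \<Longrightarrow> i < r \<Longrightarrow> col Xrel k $ i = Xrel $$ (i,k)"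
  using Xrel_carrier by simp

lemma tail_expansion_nth:
  assumes k: "k < r" and a: "a < total"
  shows "(\<Sum>p<total. chain_vec (fst (ipos p)) (snd (ipos p)) $ a * tail k $ p) = chain_vec k (ms ! k) $ a"
proof -
  have "W *\<^sub>v tail k = chain_vec k (ms ! k)"
    unfolding tail_def using W_carrier W' chain_vec_carrier[OF k] WW'
    by (simp add: assoc_mult_mat_vec[symmetric, of W total total W' total])
  then show ?thesis using W_mult_vec_nth[OF tail_carrier[OF k] a] by simp
qed

lemma pres_map_Xrel_col: assumes k: "k < r" shows "pres_map A vs (col Xrel k) = 0\<^sub>v total"
proof (rule eq_vecI)
  show "dim_vec (pres_map A vs (col Xrel k)) = dim_vec (0\<^sub>v total)" using pres_map_carrier[OF A vs_car] by simp
  fix a assume "a < dim_vec (0\<^sub>v total)"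
  then have a: "a < total" by simp
  define T1 where "T1 i j = (if i = k \<and> j = ms ! i then 1 else (0::'a))" for i j
  define T2 where "T2 i j = (if i < r' \<and> k < r' \<and> j < ms ! i then tail k $ pos (i,j) else 0)" for i j
  have N: "\<forall>i<r. \<forall>j\<ge>Suc total. coeff (col Xrel k $ i) j = 0"
    using col_Xrel[OF k] Xrel_coeff[OF _ k] ms_le_total by fastforce
  have "pres_map A vs (col Xrel k) $ a = (\<Sum>i<r. \<Sum>j<Suc total. coeff (col Xrel k $ i) j * chain_vec i j $ a)"
    by (rule pres_map_nth_chain_vec[OF a N])
  also have "\<dots> = (\<Sum>i<r. \<Sum>j<Suc total. T1 i j * chain_vec i j $ a) - (\<Sum>i<r. \<Sum>j<Suc total. T2 i j * chain_vec i j $ a)"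
    by (simp add: col_Xrel[OF k] Xrel_coeff[OF _ k] T1_def T2_def sum_subtractf left_diff_distrib)
  also have "(\<Sum>i<r. \<Sum>j<Suc total. T1 i j * chain_vec i j $ a) = (\<Sum>i<r. if i = k then chain_vec k (ms ! k) $ a else 0)"
  proof (rule sum.cong, simp)
    fix i assume i: "i \<in> {..<r}"
    have "ms ! i < Suc total" using ms_le_total[of i] i by simp
    have "(\<Sum>j<Suc total. T1 i j * chain_vec i j $ a)
        = (\<Sum>j<Suc total. if i = k \<and> j = ms ! i then chain_vec i j $ a else 0)"
      by (rule sum.cong) (auto simp: T1_def)
    also have "\<dots> = (if i = k then (\<Sum>j<Suc total. if j = ms ! i then chain_vec i j $ a else 0) else 0)"
      by auto
    also have "\<dots> = (if i = k then chain_vec k (ms ! k) $ a else 0)"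
      using \<open>ms ! i < Suc total\<close> by (auto simp: sum.delta')
    finally show "(\<Sum>j<Suc total. T1 i j * chain_vec i j $ a) = (if i = k then chain_vec k (ms ! k) $ a else 0)" .
  qed
  also have "\<dots> = chain_vec k (ms ! k) $ a" using k by simp
  also have "(\<Sum>i<r. \<Sum>j<Suc total. T2 i j * chain_vec i j $ a) = (\<Sum>p<total. T2 (fst (ipos p)) (snd (ipos p)) * chain_vec (fst (ipos p)) (snd (ipos p)) $ a)"
  proof (rule sum_chain_cells)
    show "\<And>i. i < r \<Longrightarrow> ms ! i \<le> Suc total" using ms_le_total le_SucI by blast
  qed (auto simp: T2_def)
  also have "\<dots> = chain_vec k (ms ! k) $ a"
  proof (cases "k < r'")
    case True
    have "(\<Sum>p<total. T2 (fst (ipos p)) (snd (ipos p)) * chain_vec (fst (ipos p)) (snd (ipos p)) $ a)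
        = (\<Sum>p<total. chain_vec (fst (ipos p)) (snd (ipos p)) $ a * tail k $ p)"
    proof (rule sum.cong, simp)
      fix p assume "p \<in> {..<total}"
      then have p: "p < total" by simp
      show "T2 (fst (ipos p)) (snd (ipos p)) * chain_vec (fst (ipos p)) (snd (ipos p)) $ a = chain_vec (fst (ipos p)) (snd (ipos p)) $ a * tail k $ p"
        using ipos_bounds[OF p] pos_ipos[OF p] True unfolding T2_def by simp
    qed
    also have "\<dots> = chain_vec k (ms ! k) $ a" by (rule tail_expansion_nth[OF k a])
    finally show ?thesis .
  next
    case False
    then show ?thesis using chain_vec_zero[OF _ k] a by (simp add: T2_def)
  qed
  finally show "pres_map A vs (col Xrel k) $ a = 0\<^sub>v total $ a" using a by simp
qed

lemma pres_map_Xrel: "p \<in> carrier_vec r \<Longrightarrow> pres_map A vs (Xrel *\<^sub>v p) = 0\<^sub>v total"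
  using pres_map_mult_mat_vec_zero[OF A vs_car Xrel_carrier _ vs_len] pres_map_Xrel_col by blast

text \<open>One step of division by Xrel: subtracting Xrel times the top coefficients lowers
  the degree bound, since Xrel is diag(t^(ms!i)) plus terms of lower degree.\<close>
lemma reduce_step:
  assumes q: "q \<in> carrier_vec r" and h: "low_degree (Suc c) q"
  shows "\<exists>av\<in>carrier_vec r. low_degree c (q - Xrel *\<^sub>v av)"
proof
  define av where "av = vec r (\<lambda>k. monom (coeff (q $ k) (ms ! k + c)) c)"
  show av: "av \<in> carrier_vec r" unfolding av_def by simp
  show "low_degree c (q - Xrel *\<^sub>v av)"
    unfolding low_degree_def
  proof (intro allI impI)
    fix i j assume i: "i < r" and j: "ms ! i + c \<le> j"
    have "(q - Xrel *\<^sub>v av) $ i = q $ i - (\<Sum>k<r. Xrel $$ (i,k) * av $ k)"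
      using i q mult_mat_vec_nth_sum[OF Xrel_carrier av i] Xrel_carrier av by simp
    then have "coeff ((q - Xrel *\<^sub>v av) $ i) j = coeff (q $ i) j - (\<Sum>k<r. coeff (Xrel $$ (i,k) * av $ k) j)"
      by (simp add: coeff_sum)
    also have "(\<Sum>k<r. coeff (Xrel $$ (i,k) * av $ k) j)
        = (\<Sum>k<r. if k = i then (if j = ms ! i + c then coeff (q $ i) (ms ! i + c) else 0) else 0)"
    proof (rule sum.cong, simp)
      fix k assume "k \<in> {..<r}"
      then have k: "k < r" by simp
      have "coeff (Xrel $$ (i,k) * av $ k) j = coeff (q $ k) (ms ! k + c) * coeff (Xrel $$ (i,k)) (j - c)"
        using j k unfolding av_def by (simp add: mult.commute[of "Xrel $$ (i,k)"] coeff_monom_mult)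
      also have "\<dots> = (if k = i then (if j = ms ! i + c then coeff (q $ i) (ms ! i + c) else 0) else 0)"
        using Xrel_coeff_high[OF i k, of "j - c"] j by auto
      finally show "coeff (Xrel $$ (i,k) * av $ k) j
        = (if k = i then (if j = ms ! i + c then coeff (q $ i) (ms ! i + c) else 0) else 0)" .
    qed
    also have "\<dots> = (if j = ms ! i + c then coeff (q $ i) (ms ! i + c) else 0)" using i by simp
    finally show "coeff ((q - Xrel *\<^sub>v av) $ i) j = 0"
      using h i j unfolding low_degree_def by auto
  qed
qed

lemma reduce:
  "q \<in> carrier_vec r \<Longrightarrow> low_degree c q \<Longrightarrow> \<exists>p\<in>carrier_vec r. low_degree 0 (q - Xrel *\<^sub>v p)"
proof (induct c arbitrary: q)
  case 0
  then have "q - Xrel *\<^sub>v 0\<^sub>v r = q" using Xrel_carrier by (simp add: mult_mat_vec_zero)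
  then show ?case using 0 by (intro bexI[of _ "0\<^sub>v r"]) auto
next
  case (Suc c)
  obtain av where av: "av \<in> carrier_vec r" and h1: "low_degree c (q - Xrel *\<^sub>v av)"
    using reduce_step[OF Suc(2,3)] by blast
  obtain p1 where p1: "p1 \<in> carrier_vec r" and hp1: "low_degree 0 (q - Xrel *\<^sub>v av - Xrel *\<^sub>v p1)"
    using Suc(1)[OF _ h1] Suc(2) av Xrel_carrier by auto
  have "q - Xrel *\<^sub>v (av + p1) = q - Xrel *\<^sub>v av - Xrel *\<^sub>v p1"
    using Suc(2) av p1 Xrel_carrier by (intro eq_vecI) (auto simp: mult_add_distrib_mat_vec[OF Xrel_carrier av p1])
  then show ?case using hp1 av p1 by (intro bexI[of _ "av + p1"]) auto
qed

lemma low_degree_exists: "\<exists>c. low_degree c q"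
proof
  show "low_degree (Suc (\<Sum>i<r. degree (q $ i))) q"
    unfolding low_degree_def
  proof (intro allI impI)
    fix i j assume i: "i < r" and j: "ms ! i + Suc (\<Sum>i<r. degree (q $ i)) \<le> j"
    have "degree (q $ i) \<le> (\<Sum>i<r. degree (q $ i))" using i by (intro member_le_sum) auto
    then show "coeff (q $ i) j = 0" using j by (intro coeff_eq_0) auto
  qed
qed

text \<open>A reduced relation is zero: its image is W applied to its coefficients, and W is
  invertible.\<close>
lemma reduced_relation_zero:
  assumes q: "q \<in> carrier_vec r" and red: "low_degree 0 q" and k: "pres_map A vs q = 0\<^sub>v total"
  shows "q = 0\<^sub>v r"
proof -
  have "W *\<^sub>v coords q = 0\<^sub>v total"
    using pres_map_reduced[of q] red k unfolding low_degree_def by simp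
  then have "W' *\<^sub>v (W *\<^sub>v coords q) = 0\<^sub>v total" using W' by (simp add: mult_mat_vec_zero)
  then have cv0: "coords q = 0\<^sub>v total"
    using W'W W' W_carrier by (simp add: assoc_mult_mat_vec[symmetric, of W' total total W total] coords_def)
  have "q $ i = 0" if i: "i < r" for i
  proof (rule poly_eqI)
    fix j
    show "coeff (q $ i) j = coeff 0 j"
    proof (cases "i < r' \<and> j < ms ! i")
      case True
      then have D: "(i,j) \<in> D" by (simp add: D_iff)
      have "coords q $ pos (i,j) = 0" using cv0 pos_lt[OF D] by simp
      then show ?thesis using pos_lt[OF D] ipos_pos[OF D] by (simp add: coords_def)
    next
      case False
      then have "ms ! i \<le> j" using ms0 i by (cases "i < r'") auto
      then show ?thesis using red i unfolding low_degree_def by simp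
    qed
  qed
  then show ?thesis using q by (intro eq_vecI) auto
qed

text \<open>Every relation among the v_i is an S[t]-combination of the columns of Xrel: reduce
  it modulo Xrel, and the reduced remainder is a relation, hence zero.\<close>
lemma pres_map_kernel_subset:
  assumes q: "q \<in> carrier_vec r" and k: "pres_map A vs q = 0\<^sub>v total"
  shows "\<exists>p\<in>carrier_vec r. q = Xrel *\<^sub>v p"
proof -
  obtain c where "low_degree c q" using low_degree_exists by blast
  from reduce[OF q this] obtain p where p: "p \<in> carrier_vec r"
    and red: "low_degree 0 (q - Xrel *\<^sub>v p)" by blast
  have Xp: "Xrel *\<^sub>v p \<in> carrier_vec r" using p Xrel_carrier by simp
  have "pres_map A vs (q - Xrel *\<^sub>v p) = 0\<^sub>v total"
  proof (rule eq_vecI)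
    fix a assume "a < dim_vec (0\<^sub>v total)"
    then have a: "a < total" by simp
    have "pres_map A vs (q - Xrel *\<^sub>v p) $ a = pres_map A vs q $ a - pres_map A vs (Xrel *\<^sub>v p) $ a"
      by (rule pres_map_diff_nth[OF A vs_car a]) (use q Xp vs_len in auto)
    then show "pres_map A vs (q - Xrel *\<^sub>v p) $ a = 0\<^sub>v total $ a"
      unfolding k pres_map_Xrel[OF p] using a by simp
  qed (use pres_map_carrier[OF A vs_car] in simp)
  then have zero: "q - Xrel *\<^sub>v p = 0\<^sub>v r" using q Xp red by (intro reduced_relation_zero) auto
  have "q = Xrel *\<^sub>v p"
  proof (rule eq_vecI)
    fix i assume "i < dim_vec (Xrel *\<^sub>v p)"
    then show "q $ i = (Xrel *\<^sub>v p) $ i"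
      using arg_cong[OF zero, of "\<lambda>v. v $ i"] q Xp Xrel_carrier by simp
  qed (use q Xrel_carrier in simp)
  then show ?thesis using p by blast
qed

lemma pres_map_kernel: "{q \<in> carrier_vec r. pres_map A vs q = 0\<^sub>v total} = {Xrel *\<^sub>v p | p. p \<in> carrier_vec r}"
proof
  show "{q \<in> carrier_vec r. pres_map A vs q = 0\<^sub>v total} \<subseteq> {Xrel *\<^sub>v p | p. p \<in> carrier_vec r}"
    using pres_map_kernel_subset by blast
  show "{Xrel *\<^sub>v p | p. p \<in> carrier_vec r} \<subseteq> {q \<in> carrier_vec r. pres_map A vs q = 0\<^sub>v total}"
    using pres_map_Xrel Xrel_carrier by auto
qed

lemma W_conj_companion: "W' * A * W = companion tail"
proof (rule eq_matI)
  show "dim_row (W' * A * W) = dim_row (companion tail)" "dim_col (W' * A * W) = dim_col (companion tail)"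
    using W' W_carrier A by (simp_all add: companion_def)
  fix a b assume "a < dim_row (companion tail)" "b < dim_col (companion tail)"
  then have a: "a < total" and b: "b < total" by (auto simp: companion_def)
  obtain i j where ij: "ipos b = (i,j)" by force
  have ir: "i < r'" "j < ms ! i" using ipos_bounds[OF b] ij by auto
  have colW: "col W b = chain_vec i j" using W_col[OF b] ij by simp
  have "(W' * A * W) $$ (a,b) = col (W' * A * W) b $ a" using a b W' A W_carrier by simp
  also have "col (W' * A * W) b = (W' * A) *\<^sub>v col W b"
    by (rule col_mult2) (use W' A W_carrier b in auto)
  also have "\<dots> = W' *\<^sub>v (A *\<^sub>v chain_vec i j)"
    unfolding colW using W' A chain_vec_carrier[of i j] ir r'_le_r
    by (simp add: assoc_mult_mat_vec[of W' total total A total])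
  also have "A *\<^sub>v chain_vec i j = chain_vec i (Suc j)"
    unfolding chain_vec_def using pow_mat_mult_vec_Suc[OF A vs_carrier] ir r'_le_r by simp
  finally have e: "(W' * A * W) $$ (a,b) = (W' *\<^sub>v chain_vec i (Suc j)) $ a" .
  show "(W' * A * W) $$ (a,b) = companion tail $$ (a,b)"
  proof (cases "Suc j < ms ! i")
    case True
    have D: "(i, Suc j) \<in> D" using True ir by (simp add: D_iff)
    have "chain_vec i (Suc j) = col W (pos (i, Suc j))" using W_col[OF pos_lt[OF D]] ipos_pos[OF D] by simp
    then have "W' *\<^sub>v chain_vec i (Suc j) = col (1\<^sub>m total) (pos (i, Suc j))"
      using W' W_carrier pos_lt[OF D] W'W by (metis col_mult2)
    then show ?thesis using e a b ij True pos_lt[OF D] by (simp add: companion_def)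
  next
    case False
    then have "Suc j = ms ! i" using ir by simp
    then show ?thesis using e a b ij False by (simp add: companion_def tail_def)
  qed
qed

text \<open>Similar matrices have the same characteristic polynomial.\<close>
lemma char_poly_eq_det_relation_mat: "char_poly A = det (relation_mat tail)"
proof -
  have B: "W' * A * W \<in> carrier_mat total total" using W' A W_carrier by simp
  have "W * (W' * A * W) * W' = (W * W') * A * (W * W')"
    using W' A W_carrier by (simp add: assoc_mult_mat[of _ total total _ total _ total])
  then have "A = W * (W' * A * W) * W'" using WW' A by simp
  then have "similar_mat A (W' * A * W)"
    by (intro similar_matI[of A "W' * A * W" W W' total]) (use A B W_carrier W' WW' W'W in auto)
  then have "char_poly A = char_poly (companion tail)" using W_conj_companion char_poly_similar by metis
  then show ?thesis unfolding char_poly_def det_char_companion .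
qed

lemma det_Xrel_eq_relation_mat: "det Xrel = det (relation_mat tail)"
proof -
  have Xm: "relation_mat tail \<in> carrier_mat r' r'" by (simp add: relation_mat_def)
  have "Xrel = four_block_mat (relation_mat tail) (0\<^sub>m r' (r - r')) (0\<^sub>m (r - r') r') (1\<^sub>m (r - r'))"
    using r'_le_r Xm by (intro eq_matI) (auto simp: Xrel_def)
  then have "det Xrel = det (relation_mat tail) * det (1\<^sub>m (r - r') :: 'a poly mat)"
    using det_four_block_mat_upper_right_zero[OF Xm refl] by simp
  then show ?thesis by simp
qed

lemma det_Xrel: "det Xrel = char_poly A" using det_Xrel_eq_relation_mat char_poly_eq_det_relation_mat by simp

lemma annihilator_relation:
  assumes f: "mat_eval_poly A f = 0\<^sub>m total total"
  shows "pres_map A vs (vec r (\<lambda>i. if i = k then f else 0)) = 0\<^sub>v total"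
proof (rule eq_vecI)
  fix a assume "a < dim_vec (0\<^sub>v total)"
  then have a: "a < total" by simp
  have "(mat_eval_poly A (if i = k then f else 0) *\<^sub>v vs ! i) $ a = 0" if i: "i < r" for i
  proof -
    have "mat_eval_poly A (if i = k then f else 0) = 0\<^sub>m total total"
      using f mat_eval_poly_0[OF A] by simp
    then show ?thesis using zero_mat_mult_vec[OF vs_carrier[OF i]] a by simp
  qed
  then show "pres_map A vs (vec r (\<lambda>i. if i = k then f else 0)) $ a = 0\<^sub>v total $ a"
    using pres_map_nth[OF A vs_car a] vs_len a by simp
qed (use pres_map_carrier[OF A vs_car] in simp)

text \<open>Collecting preimages of the relations f1 e_k gives Xrel Y = f1 I.\<close>
lemma Xrel_right_cofactor:
  assumes f1: "mat_eval_poly A f1 = 0\<^sub>m total total"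
  shows "\<exists>Y\<in>carrier_mat r r. Xrel * Y = f1 \<cdot>\<^sub>m 1\<^sub>m r"
proof -
  define fk where "fk k = vec r (\<lambda>i. if i = k then f1 else 0)" for k
  have "\<exists>y\<in>carrier_vec r. fk k = Xrel *\<^sub>v y" for k
    using pres_map_kernel_subset annihilator_relation[OF f1] unfolding fk_def by simp
  then obtain y where y: "\<And>k. y k \<in> carrier_vec r" "\<And>k. fk k = Xrel *\<^sub>v y k" by metis
  define Y where "Y = mat r r (\<lambda>(i,k). y k $ i)"
  have Y: "Y \<in> carrier_mat r r" unfolding Y_def by simp
  have colY: "col Y k = y k" if "k < r" for k
    using y(1)[of k] that unfolding Y_def by (intro eq_vecI) auto
  have "Xrel * Y = f1 \<cdot>\<^sub>m 1\<^sub>m r"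
  proof (rule eq_matI)
    fix i k assume "i < dim_row (f1 \<cdot>\<^sub>m 1\<^sub>m r)" "k < dim_col (f1 \<cdot>\<^sub>m 1\<^sub>m r)"
    then have i: "i < r" and k: "k < r" by auto
    have "(Xrel * Y) $$ (i,k) = (Xrel *\<^sub>v col Y k) $ i" using i k Xrel_carrier Y by simp
    also have "\<dots> = fk k $ i" using colY[OF k] y by simp
    finally show "(Xrel * Y) $$ (i,k) = (f1 \<cdot>\<^sub>m 1\<^sub>m r) $$ (i,k)" using i k by (simp add: fk_def)
  qed (use Xrel_carrier Y in auto)
  then show ?thesis using Y by blast
qed

text \<open>The cofactor also works on the other side, as det Xrel = char_poly A is monic.\<close>
lemma Xrel_cofactor:
  assumes f1: "mat_eval_poly A f1 = 0\<^sub>m total total"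
  shows "\<exists>Y\<in>carrier_mat r r. Y * Xrel = f1 \<cdot>\<^sub>m 1\<^sub>m r"
proof -
  obtain Y where Y: "Y \<in> carrier_mat r r" and XY: "Xrel * Y = f1 \<cdot>\<^sub>m 1\<^sub>m r"
    using Xrel_right_cofactor[OF f1] by blast
  have dX: "det Xrel \<noteq> 0" using det_Xrel degree_monic_char_poly[OF A] by auto
  show ?thesis using right_factor_commutes[OF Xrel_carrier Y XY dX] Y by blast
qed

end

lemma (in adapted_basis) Xrel_congruent:
  assumes tail_dvd: "\<And>k p. k < r' \<Longrightarrow> p < total \<Longrightarrow> of_nat l dvd tail k $ p"
    and i: "i < r" and j: "j < r"
  shows "poly_cong_l l (Xrel $$ (i, j)) (if i = j then monom 1 (ms ! i) else 0)"
  unfolding poly_cong_l_def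
proof
  fix k
  have "coeff (Xrel $$ (i, j) - (if i = j then monom 1 (ms ! i) else 0)) k
      = - (if i < r' \<and> j < r' \<and> k < ms ! i then tail j $ pos (i,k) else 0)"
    using Xrel_coeff[OF i j, of k] by (auto simp: coeff_monom)
  moreover have "of_nat l dvd (if i < r' \<and> j < r' \<and> k < ms ! i then tail j $ pos (i,k) else 0)"
    using tail_dvd pos_lt[of i k] by (auto simp: D_iff)
  ultimately show "of_nat l dvd coeff (Xrel $$ (i, j) - (if i = j then monom 1 (ms ! i) else 0)) k"
    by simp
qed


subsection \<open>Lifting a Jordan chain basis from the residue field\<close>

lemma residue_map_hom: "residue_map l \<pi> \<Longrightarrow> comm_ring_hom \<pi>"
  unfolding residue_map_def by unfold_locales (auto simp: dvd_0_right)

lemma unit_of_residue_nonzero: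
  fixes s :: "'a :: {idom, ring_char_0}" and \<pi> :: "'a \<Rightarrow> 'k :: field"
  assumes S: "unramified_int_ring l TYPE('a)" and res: "residue_map l \<pi>" and s: "\<pi> s \<noteq> 0"
  shows "s dvd 1"
proof -
  have ndvd: "\<not> of_nat l dvd s" using res s unfolding residue_map_def by auto
  then have "s \<noteq> 0" by auto
  then obtain u k where u: "u dvd 1" "s = u * of_nat l ^ k"
    using S unfolding unramified_int_ring_def by blast
  have "k = 0"
  proof (rule ccontr)
    assume "k \<noteq> 0"
    then have "of_nat l dvd s" using u(2) by (simp add: dvd_power)
    then show False using ndvd by simp
  qed
  then show ?thesis using u by simp
qed

lemma inverse_mat_of_unit_det:
  fixes W :: "'a :: comm_ring_1 mat"
  assumes W: "W \<in> carrier_mat n n" and u: "det W dvd 1"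
  shows "\<exists>W'. W' \<in> carrier_mat n n \<and> W * W' = 1\<^sub>m n \<and> W' * W = 1\<^sub>m n"
proof -
  obtain winv where winv: "1 = det W * winv" using u by (rule dvdE)
  note adj = adj_mat[OF W]
  have "W * (winv \<cdot>\<^sub>m adj_mat W) = 1\<^sub>m n"
  proof -
    have "W * (winv \<cdot>\<^sub>m adj_mat W) = winv \<cdot>\<^sub>m (W * adj_mat W)" using W adj by (simp add: mult_smult_distrib)
    also have "\<dots> = 1\<^sub>m n" unfolding adj(2) using winv by (intro eq_matI) (auto simp: mult.commute)
    finally show ?thesis .
  qed
  moreover have "(winv \<cdot>\<^sub>m adj_mat W) * W = 1\<^sub>m n"
  proof -
    have "(winv \<cdot>\<^sub>m adj_mat W) * W = winv \<cdot>\<^sub>m (adj_mat W * W)" using W adj by (simp add: mult_smult_assoc_mat)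
    also have "\<dots> = 1\<^sub>m n" unfolding adj(3) using winv by (intro eq_matI) (auto simp: mult.commute)
    finally show ?thesis .
  qed
  moreover have "winv \<cdot>\<^sub>m adj_mat W \<in> carrier_mat n n" using adj(1) by simp
  ultimately show ?thesis by blast
qed

lemma filter_nonzero_sorted:
  "sorted (rev xs) \<Longrightarrow> filter (\<lambda>m::nat. m \<noteq> 0) xs = takeWhile (\<lambda>m. m \<noteq> 0) xs"
proof (induct xs)
  case (Cons x xs)
  have s: "sorted (rev xs)" "\<forall>y\<in>set xs. y \<le> x" using Cons(2) by (auto simp: sorted_append)
  show ?case
  proof (cases "x = 0")
    case True
    then have "\<forall>y\<in>set xs. y = 0" using s by auto
    then have "filter (\<lambda>m::nat. m \<noteq> 0) xs = []" by (simp add: filter_empty_conv)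
    then show ?thesis using True by simp
  qed (use Cons s in simp)
qed simp

lemma Hp_is_chains:
  fixes N :: "'k :: field mat"
  assumes "Hp_is N ms"
  obtains r' where "r' \<le> length ms" "\<And>i. i < r' \<Longrightarrow> 0 < ms ! i"
    "\<And>i. r' \<le> i \<Longrightarrow> i < length ms \<Longrightarrow> ms ! i = 0"
    "jordan_nf N (map (\<lambda>m. (m, 0)) (take r' ms))"
proof -
  define r' where "r' = length (takeWhile (\<lambda>m::nat. m \<noteq> 0) ms)"
  have srt: "sorted (rev ms)" and jnf: "jordan_nf N (map (\<lambda>m. (m, 0)) (filter (\<lambda>m. m \<noteq> 0) ms))"
    using assms unfolding Hp_is_def by auto
  have "filter (\<lambda>m. m \<noteq> 0) ms = take r' ms"
    unfolding filter_nonzero_sorted[OF srt] r'_def by (rule takeWhile_eq_take)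
  then have jordan: "jordan_nf N (map (\<lambda>m. (m, 0)) (take r' ms))" using jnf by simp
  have r': "r' \<le> length ms" unfolding r'_def by (rule length_takeWhile_le)
  have pos: "0 < ms ! i" if "i < r'" for i
  proof -
    have "ms ! i \<in> set (takeWhile (\<lambda>m. m \<noteq> 0) ms)"
      using that unfolding r'_def by (metis nth_mem takeWhile_nth)
    then show ?thesis by (auto dest: set_takeWhileD)
  qed
  have zero: "ms ! i = 0" if "r' \<le> i" "i < length ms" for i
  proof -
    have "r' < length ms" using that by simp
    then have "ms ! r' = 0" unfolding r'_def using nth_length_takeWhile by fastforce
    moreover have "ms ! i \<le> ms ! r'" using sorted_rev_nth_mono[OF srt that(1)] that by simp
    ultimately show ?thesis by simp
  qed
  show ?thesis by (rule that[OF r' pos zero jordan])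
qed

context chain_cells
begin

lemma sum_list_take_ms: "i \<le> r' \<Longrightarrow> sum_list (take i (take r' ms)) = start i"
proof -
  assume i: "i \<le> r'"
  then have L: "length (take i (take r' ms)) = i" using r'_le by simp
  have "sum_list (take i (take r' ms)) = (\<Sum>k<i. take i (take r' ms) ! k)"
    by (simp only: sum_list_sum_nth L atLeast0LessThan)
  also have "\<dots> = (\<Sum>k<i. ms ! k)" using i by (intro sum.cong) auto
  finally show ?thesis unfolding start_def .
qed

definition jordan_mat :: "'k :: field mat" where
  "jordan_mat = jordan_matrix (map (\<lambda>m. (m, 0)) (take r' ms))"

lemma jordan_mat_carrier: "(jordan_mat :: 'k :: field mat) \<in> carrier_mat total total"
proof -
  have "sum_list (take r' ms) = total" using sum_list_take_ms[of r'] by (simp add: total_def)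
  then show ?thesis by (intro carrier_matI) (simp_all add: jordan_mat_def comp_def)
qed

lemma jordan_mat_col:
  assumes i: "i < r'" and k: "k < ms ! i"
  shows "col (jordan_mat :: 'k :: field mat) (start i + k)
    = (if 0 < k then unit_vec total (start i + k - 1) else 0\<^sub>v total)"
proof (rule eq_vecI)
  have sk: "start i + k < total"
    using i k start_mono[of "Suc i" r'] unfolding total_def by (simp add: start_Suc)
  fix a assume "a < dim_vec (if 0 < k then unit_vec total (start i + k - 1) else 0\<^sub>v total)"
  then have a: "a < total" by (cases "0 < k") auto
  have "(jordan_mat :: 'k mat) $$ (a, start i + k) = (if 0 < k \<and> a = start i + k - 1 then 1 else 0)"
    using jordan_matrix_nilpotent_col[of i "take r' ms" k a] i k a r'_le
      sum_list_take_ms[of i] sum_list_take_ms[of r']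
    unfolding jordan_mat_def total_def by simp
  moreover have "col (jordan_mat :: 'k mat) (start i + k) $ a = jordan_mat $$ (a, start i + k)"
    using a sk carrier_matD[OF jordan_mat_carrier[where 'k = 'k]] by simp
  ultimately show "col (jordan_mat :: 'k mat) (start i + k) $ a
    = (if 0 < k then unit_vec total (start i + k - 1) else 0\<^sub>v total) $ a"
    using a by (cases "0 < k") (auto simp: unit_vec_def)
qed (use jordan_mat_carrier in auto)

lemma jordan_chain_basis:
  fixes N :: "'k :: field mat"
  assumes N: "N \<in> carrier_mat n n" and jnf: "jordan_nf N (map (\<lambda>m. (m, 0)) (take r' ms))"
  obtains P where "n = total" "P \<in> carrier_mat n n" "det P \<noteq> 0"
    "\<And>i k. i < r' \<Longrightarrow> k < ms ! i \<Longrightarrow>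
       N *\<^sub>v col P (start i + k) = (if 0 < k then col P (start i + k - 1) else 0\<^sub>v n)"
proof -
  have "similar_mat N jordan_mat" using jnf unfolding jordan_nf_def jordan_mat_def by auto
  from similar_matD[OF this] obtain n' P Q where PQ': "{N, jordan_mat, P, Q} \<subseteq> carrier_mat n' n'"
    "P * Q = 1\<^sub>m n'" "Q * P = 1\<^sub>m n'" "N = P * jordan_mat * Q" by blast
  have "n' = n" using PQ'(1) N by auto
  note PQ = PQ'[unfolded this]
  have P: "P \<in> carrier_mat n n" and Q: "Q \<in> carrier_mat n n" and J: "(jordan_mat :: 'k mat) \<in> carrier_mat n n"
    using PQ(1) by auto
  have n: "n = total" using carrier_matD(1)[OF J] carrier_matD(1)[OF jordan_mat_carrier[where 'k = 'k]] by simp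
  have "det P * det Q = 1" using det_mult[OF P Q] PQ(2) by simp
  then have detP: "det P \<noteq> 0" by auto
  have NP: "N * P = P * jordan_mat"
  proof -
    have "N * P = P * jordan_mat * (Q * P)" using PQ(4) P Q J by (simp add: assoc_mult_mat[of _ n n _ n _ n])
    then show ?thesis using PQ(3) P J by simp
  qed
  have chains: "N *\<^sub>v col P (start i + k) = (if 0 < k then col P (start i + k - 1) else 0\<^sub>v n)"
    if i: "i < r'" and k: "k < ms ! i" for i k
  proof -
    have sk: "start i + k < n"
      using i k start_mono[of "Suc i" r'] n unfolding total_def by (simp add: start_Suc)
    have "N *\<^sub>v col P (start i + k) = col (N * P) (start i + k)"
      using col_mult2[OF N P sk] by simp
    also have "\<dots> = P *\<^sub>v col jordan_mat (start i + k)" unfolding NP by (rule col_mult2[OF P J sk])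
    also have "\<dots> = (if 0 < k then col P (start i + k - 1) else 0\<^sub>v n)"
    proof (cases "0 < k")
      case True
      have "P *\<^sub>v unit_vec n (start i + k - 1) = col P (start i + k - 1)"
        using P sk by (intro eq_vecI) auto
      then show ?thesis unfolding jordan_mat_col[OF i k] using True n by simp
    next
      case False
      then show ?thesis unfolding jordan_mat_col[OF i k] using mult_mat_vec_zero[OF P] n by simp
    qed
    finally show ?thesis .
  qed
  from that[OF n P detP chains] show ?thesis .
qed

end

text \<open>Setting: a Jordan chain basis P of the reduction of A modulo l.  Lifting the chain
  heads gives generators v_i, and the vectors A^j v_i reduce to the columns of P.\<close>
locale lifted_chains = chain_cells ms r' for ms r' +
  fixes l :: nat and \<pi> :: "'a :: {idom, ring_char_0} \<Rightarrow> 'k :: field"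
    and A :: "'a mat" and P :: "'k mat" and r :: nat
  assumes S: "unramified_int_ring l TYPE('a)" and res: "residue_map l \<pi>"
    and A: "A \<in> carrier_mat total total"
    and P: "P \<in> carrier_mat total total" and detP: "det P \<noteq> 0"
    and chain: "\<And>i k. i < r' \<Longrightarrow> k < ms ! i \<Longrightarrow> map_mat \<pi> A *\<^sub>v col P (start i + k)
        = (if 0 < k then col P (start i + k - 1) else 0\<^sub>v total)"
    and ms_len: "length ms = r"
    and ms0: "\<And>i. r' \<le> i \<Longrightarrow> i < r \<Longrightarrow> ms ! i = 0"
begin

sublocale h: comm_ring_hom \<pi> by (rule residue_map_hom[OF res])

lemma residue_zero_iff: "\<pi> a = 0 \<longleftrightarrow> of_nat l dvd a"
  using res unfolding residue_map_def by blast

definition lift_vec :: "'k vec \<Rightarrow> 'a vec" where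
  "lift_vec v = vec total (\<lambda>a. inv_into UNIV \<pi> (v $ a))"

definition gens :: "'a vec list" where
  "gens = map (\<lambda>i. if i < r' then lift_vec (col P (jpos (i,0))) else 0\<^sub>v total) [0..<r]"

definition W :: "'a mat" where
  "W = mat total total (\<lambda>(a,p). (A ^\<^sub>m (snd (ipos p)) *\<^sub>v (gens ! fst (ipos p))) $ a)"

lemma r'_le_r: "r' \<le> r" using r'_le ms_len by simp

lemma gens_carrier: "i < r \<Longrightarrow> gens ! i \<in> carrier_vec total"
  unfolding gens_def lift_vec_def by simp

lemma lift_vec: "p < total \<Longrightarrow> map_vec \<pi> (lift_vec (col P p)) = col P p"
  using P res unfolding lift_vec_def residue_map_def by (intro eq_vecI) (auto simp: surj_f_inv_f)

lemma gens_reduce: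
  assumes i: "i < r'"
  shows "j < ms ! i \<Longrightarrow> map_vec \<pi> (A ^\<^sub>m j *\<^sub>v gens ! i) = col P (jpos (i,j))"
proof (induct j)
  case 0
  have "jpos (i,0) < total" using jpos_lt[of "(i,0)"] i ms_pos[OF i] by (simp add: D_iff)
  then show ?case using A gens_carrier[of i] i r'_le_r lift_vec by (simp add: gens_def)
next
  case (Suc j)
  have x: "A ^\<^sub>m j *\<^sub>v gens ! i \<in> carrier_vec total"
    using pow_mat_mult_vec_carrier[OF A gens_carrier] i r'_le_r by simp
  have "map_vec \<pi> (A ^\<^sub>m Suc j *\<^sub>v gens ! i) = map_mat \<pi> A *\<^sub>v col P (jpos (i,j))"
    using pow_mat_mult_vec_Suc[OF A gens_carrier, of i j, symmetric] h.mult_mat_vec_hom[OF A x]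
      Suc i r'_le_r by simp
  also have "\<dots> = col P (jpos (i, Suc j))"
    using chain[OF i, of "ms ! i - 1 - j"] Suc(2) by (simp add: jpos_def)
  finally show ?case .
qed

lemma gens_top_reduce:
  assumes i: "i < r'"
  shows "map_vec \<pi> (A ^\<^sub>m (ms ! i) *\<^sub>v gens ! i) = 0\<^sub>v total"
proof -
  obtain j where mj: "ms ! i = Suc j" using ms_pos[OF i] by (cases "ms ! i") auto
  have x: "A ^\<^sub>m j *\<^sub>v gens ! i \<in> carrier_vec total"
    using pow_mat_mult_vec_carrier[OF A gens_carrier] i r'_le_r by simp
  have "map_vec \<pi> (A ^\<^sub>m Suc j *\<^sub>v gens ! i) = map_mat \<pi> A *\<^sub>v col P (jpos (i,j))"
    using pow_mat_mult_vec_Suc[OF A gens_carrier, of i j, symmetric] h.mult_mat_vec_hom[OF A x]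
      gens_reduce[OF i, of j] mj i r'_le_r by simp
  also have "\<dots> = 0\<^sub>v total" using chain[OF i, of 0] mj by (simp add: jpos_def)
  finally show ?thesis using mj by simp
qed

text \<open>The reduction of W is P with permuted columns, so det W is a unit.\<close>
lemma det_W_unit: "det W dvd 1"
proof -
  define \<sigma> where "\<sigma> p = (if p < total then jpos (ipos p) else p)" for p
  have W: "W \<in> carrier_mat total total" unfolding W_def by simp
  have piW: "map_mat \<pi> W = mat total total (\<lambda>(a,p). P $$ (a, \<sigma> p))"
  proof (rule eq_matI)
    fix a p assume "a < dim_row (mat total total (\<lambda>(a,p). P $$ (a, \<sigma> p)))"
      "p < dim_col (mat total total (\<lambda>(a,p). P $$ (a, \<sigma> p)))"
    then have a: "a < total" and p: "p < total" by auto
    obtain i j where ij: "ipos p = (i,j)" by force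
    have ij': "i < r'" "j < ms ! i" using ipos_D[OF p] ij by (auto simp: D_iff)
    have x: "A ^\<^sub>m j *\<^sub>v gens ! i \<in> carrier_vec total"
      using pow_mat_mult_vec_carrier[OF A gens_carrier] ij' r'_le_r by simp
    have "\<pi> ((A ^\<^sub>m j *\<^sub>v gens ! i) $ a) = map_vec \<pi> (A ^\<^sub>m j *\<^sub>v gens ! i) $ a"
      using carrier_vecD[OF x] a by simp
    also have "\<dots> = col P (jpos (i,j)) $ a" using gens_reduce[OF ij'] by simp
    also have "\<dots> = P $$ (a, \<sigma> p)"
      using p a P jpos_lt[of "(i,j)"] ipos_D[OF p] ij by (simp add: \<sigma>_def)
    finally show "map_mat \<pi> W $$ (a,p) = mat total total (\<lambda>(a,p). P $$ (a, \<sigma> p)) $$ (a,p)"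
      using a p ij unfolding W_def by simp
  qed (auto simp: W_def)
  have "bij_betw ipos {..<total} D" unfolding ipos_def by (rule bij_betw_inv_into[OF pos_bij])
  then have "bij_betw (jpos \<circ> ipos) {..<total} {..<total}" by (rule bij_betw_trans[OF _ jpos_bij])
  then have "bij_betw \<sigma> {..<total} {..<total}"
    by (rule bij_betw_cong[THEN iffD1, rotated]) (simp add: \<sigma>_def)
  then have \<sigma>: "\<sigma> permutes {0..<total}"
    by (intro bij_imp_permutes) (auto simp: \<sigma>_def atLeast0LessThan)
  have "det (map_mat \<pi> W) = signof \<sigma> * det P"
    unfolding piW by (rule det_permute_cols[OF P \<sigma>])
  moreover have "(signof \<sigma> :: 'k) \<noteq> 0" by (cases \<sigma> rule: sign_cases) simp_all
  ultimately have "\<pi> (det W) \<noteq> 0" using detP W by simp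
  then show ?thesis by (rule unit_of_residue_nonzero[OF S res])
qed

definition W' :: "'a mat" where
  "W' = (SOME W'. W' \<in> carrier_mat total total \<and> W * W' = 1\<^sub>m total \<and> W' * W = 1\<^sub>m total)"

lemma W': "W' \<in> carrier_mat total total" "W * W' = 1\<^sub>m total" "W' * W = 1\<^sub>m total"
  using someI_ex[OF inverse_mat_of_unit_det[OF _ det_W_unit]] unfolding W'_def W_def by auto

lemma adapted: "adapted_basis ms r' A r gens W W'"
  using A ms_len gens_carrier ms0 W' r'_le_r chain_cells_axioms
  by unfold_locales (auto simp: gens_def W_def lift_vec_def in_set_conv_nth)

text \<open>The tail coordinates vanish modulo l, because A^(ms!k) v_k does.\<close>
lemma tail_divisible:
  assumes k: "k < r'" and p: "p < total"
  shows "of_nat l dvd adapted_basis.tail ms A gens W' k $ p"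
proof -
  interpret adapted_basis ms r' A r gens W W' by (rule adapted)
  have "map_vec \<pi> (tail k) = map_mat \<pi> W' *\<^sub>v map_vec \<pi> (chain_vec k (ms ! k))"
    unfolding tail_def using h.mult_mat_vec_hom[OF W'(1) chain_vec_carrier] k r'_le_r by simp
  also have "map_vec \<pi> (chain_vec k (ms ! k)) = 0\<^sub>v total"
    unfolding chain_vec_def using gens_top_reduce[OF k] .
  finally have "map_vec \<pi> (tail k) $ p = 0" using W'(1) p by (simp add: mult_mat_vec_zero)
  moreover have "tail k \<in> carrier_vec total" using tail_carrier[of k] k r'_le_r by simp
  ultimately show ?thesis using p by (simp add: residue_zero_iff)
qed

end


theorem mainTheorem11:
  fixes l :: nat and \<pi> :: "'a :: {idom, ring_char_0} \<Rightarrow> 'k :: field"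
    and f1 :: "'a poly" and d1 :: nat
    and n :: nat and A :: "'a mat" and r :: nat and gens :: "'a vec list" and ms :: "nat list"
  assumes S: "unramified_int_ring l TYPE('a)"
    and res: "residue_map l \<pi>"
    and f1_monic: "monic f1" and f1_deg: "degree f1 = d1"
    and f1_cong: "poly_cong_l l f1 (monom 1 d1)"
    and A: "A \<in> carrier_mat n n"
    and R_module: "mat_eval_poly A f1 = 0\<^sub>m n n"
    and gens: "length gens = r" "set gens \<subseteq> carrier_vec n"
    and generated: "\<forall>w \<in> carrier_vec n. \<exists>q \<in> carrier_vec r. w = pres_map A gens q"
    and ms: "length ms = r" and Hp: "Hp_is (map_mat \<pi> A) ms"
  shows "\<exists>X Y vs. X \<in> carrier_mat r r \<and> Y \<in> carrier_mat r r \<and>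
           Y * X = f1 \<cdot>\<^sub>m 1\<^sub>m r \<and> det X = char_poly A \<and>
           length vs = r \<and> set vs \<subseteq> carrier_vec n \<and>
           (\<forall>w \<in> carrier_vec n. \<exists>q \<in> carrier_vec r. w = pres_map A vs q) \<and>
           {q \<in> carrier_vec r. pres_map A vs q = 0\<^sub>v n} = {X *\<^sub>v p | p. p \<in> carrier_vec r} \<and>
           (\<forall>i < r. \<forall>j < r. poly_cong_l l (X $$ (i, j))
                (if i = j then monom 1 (ms ! i) else 0))"
proof -
  obtain r' where r': "r' \<le> length ms" and ms_pos: "\<And>i. i < r' \<Longrightarrow> 0 < ms ! i"
    and ms0: "\<And>i. r' \<le> i \<Longrightarrow> i < length ms \<Longrightarrow> ms ! i = 0"
    and jordan: "jordan_nf (map_mat \<pi> A) (map (\<lambda>m. (m, 0)) (take r' ms))"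
    using Hp_is_chains[OF Hp] by blast
  interpret chain_cells ms r' using r' ms_pos by unfold_locales
  obtain P where n: "n = total" and P: "P \<in> carrier_mat n n" and detP: "det P \<noteq> 0"
    and chain: "\<And>i k. i < r' \<Longrightarrow> k < ms ! i \<Longrightarrow> map_mat \<pi> A *\<^sub>v col P (start i + k)
      = (if 0 < k then col P (start i + k - 1) else 0\<^sub>v n)"
    using jordan_chain_basis[OF _ jordan] A by (metis map_carrier_mat)
  interpret L: lifted_chains ms r' l \<pi> A P r
    using S res A P detP chain ms ms0 n by unfold_locales auto
  interpret adapted_basis ms r' A r L.gens L.W L.W' by (rule L.adapted)
  obtain Y where Y: "Y \<in> carrier_mat r r" "Y * Xrel = f1 \<cdot>\<^sub>m 1\<^sub>m r"
    using Xrel_cofactor R_module n by blast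
  show ?thesis
  proof (intro exI conjI)
    show "Xrel \<in> carrier_mat r r" "Y \<in> carrier_mat r r" "Y * Xrel = f1 \<cdot>\<^sub>m 1\<^sub>m r"
      "det Xrel = char_poly A" "length L.gens = r" "set L.gens \<subseteq> carrier_vec n"
      using Xrel_carrier Y det_Xrel vs_len vs_car n by auto
    show "\<forall>w\<in>carrier_vec n. \<exists>q\<in>carrier_vec r. w = pres_map A L.gens q"
      using pres_map_surj n by auto
    show "{q \<in> carrier_vec r. pres_map A L.gens q = 0\<^sub>v n} = {Xrel *\<^sub>v p | p. p \<in> carrier_vec r}"
      using pres_map_kernel n by simp
    show "\<forall>i<r. \<forall>j<r. poly_cong_l l (Xrel $$ (i, j)) (if i = j then monom 1 (ms ! i) else 0)"
      using Xrel_congruent[OF L.tail_divisible] by auto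
  qed
qed

end
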